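(* There exist absolute constants $c_1,c_2,c_3>0$ such that for all integers $b\ge1$ and $\ell\ge1$ the graph $G_{b,\ell}$ satisfies: (i) $2^{b\ell+c_1(b+\log\ell)}\le|V(G_{b,\ell})|\le 2^{b\ell+c_2(b+\log \ell)}$; (ii) $G_{b,\ell}$ has maximum degree $3$; (iii) every hub labeling $\{S_v\}$ of $G_{b,\ell}$ satisfies $\frac{1}{|V(G_{b,\ell})|}\sum_{v\in V(G_{b,\ell})}|S_v|\ge 2^{b\ell-c_3(b+\ell)}$.
   Context: Notation $[a,b]=\{a,a+1,\dots,b\}$. Fix integers $b,\ell\ge1$, set $s=2^b$ and $A=3\ell s^2$. The weighted graph $H_{b,\ell}$ has vertex set $V=\bigcup_{i=0}^{2\ell}V_i$ with $V_i=\{v_{i,\vec j}:\vec j\in[0,s-1]^\ell\}$. For $i\in[0,2\ell-1]$ let $c(i)=i+1$ if $i<\ell$ and $c(i)=2\ell-i$ if $i\ge\ell$. There is an edge between $v_{i,\vec j}$ and $v_{i+1,\vec j'}$ iff $j_k=j'_k$ for all $k\ne c(i)$ (so $\vec j,\vec j'$ may differ only in coordinate $c=c(i)$), with weight $A+(j_c-j'_c)^2$; there are no other edges. The unweighted graph $G_{b,\ell}$ is obtained from $H_{b,\ell}$ as follows: every vertex $v\in V_i$ is kept, and gets attached (root adjacent to $v$) a complete binary tree $T^{\mathrm{in}}_v$ of depth $b$ with $s$ leaves, present only if $i>0$, whose leaves are labeled $v^{\mathrm{in}}_u$ for the $s$ neighbors $u\in V_{i-1}$ of $v$ in $H_{b,\ell}$,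 and a complete binary tree $T^{\mathrm{out}}_v$ of depth $b$ with $s$ leaves, present only if $i<2\ell$, whose leaves are labeled $v^{\mathrm{out}}_u$ for the $s$ neighbors $u\in V_{i+1}$ of $v$; all trees are disjoint. For every edge $e=\{u,v\}$ of $H_{b,\ell}$ with $u\in V_i,v\in V_{i+1}$, the leaves $u^{\mathrm{out}}_v$ and $v^{\mathrm{in}}_u$ are joined by a path of length $w(e)-2b-2$ through new auxiliary vertices (so that the $u$–$v$ route through the gadget has length $w(e)$). A hub labeling of a graph is a family of sets $S_v\subseteq V$ such that for every pair $u,v$ at finite distance there is $w\in S_u\cap S_v$ with $\mathrm{dist}(u,w)+\mathrm{dist}(w,v)=\mathrm{dist}(u,v)$. *)

theory Defs
  imports Complex_Main
begin

text \<open>HV i j         : the vertex v_{i,j} of H_{b,l}  (j is a list of length l, coordinate k stored at index k-1)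
  TIn i j d p    : node at depth d (root depth 0, leaves depth b), position p < 2^d, of the tree T^in of v_{i,j}
  TOut i j d p   : same for the tree T^out of v_{i,j}
  Aux i j j' t   : t-th internal vertex of the gadget path of the H-edge {v_{i,j}, v_{i+1,j'}}\<close>
datatype gvert =
    HV nat "nat list"
  | TIn nat "nat list" nat nat
  | TOut nat "nat list" nat nat
  | Aux nat "nat list" "nat list" nat

definition cfun :: "nat \<Rightarrow> nat \<Rightarrow> nat" where
  "cfun l i = (if i < l then i + 1 else 2 * l - i)"

definition validj :: "nat \<Rightarrow> nat \<Rightarrow> nat list \<Rightarrow> bool" where
  "validj b l j \<longleftrightarrow> length j = l \<and> (\<forall>x\<in>set j. x < 2 ^ b)"

definition Hadj :: "nat \<Rightarrow> nat \<Rightarrow> nat \<Rightarrow> nat list \<Rightarrow> nat list \<Rightarrow> bool" where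
  "Hadj b l i j j' \<longleftrightarrow> i < 2 * l \<and> validj b l j \<and> validj b l j'
     \<and> (\<forall>k<l. k \<noteq> cfun l i - 1 \<longrightarrow> j ! k = j' ! k)"

definition Aconst :: "nat \<Rightarrow> nat \<Rightarrow> nat" where
  "Aconst b l = 3 * l * (2 ^ b) ^ 2"

definition Hweight :: "nat \<Rightarrow> nat \<Rightarrow> nat \<Rightarrow> nat list \<Rightarrow> nat list \<Rightarrow> nat" where
  "Hweight b l i j j' = nat (int (Aconst b l)
      + (int (j ! (cfun l i - 1)) - int (j' ! (cfun l i - 1))) ^ 2)"

text \<open>Length of the gadget path joining the two leaves: w(e) - 2b - 2.\<close>
definition plen :: "nat \<Rightarrow> nat \<Rightarrow> nat \<Rightarrow> nat list \<Rightarrow> nat list \<Rightarrow> nat" where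
  "plen b l i j j' = Hweight b l i j j' - 2 * b - 2"

text \<open>Leaf labelling: sigma True i j x is the leaf position in T^in_{v_{i,j}} of the neighbour
  u in V_{i-1} whose coordinate c(i-1) equals x; sigma False i j x is the leaf position in
  T^out_{v_{i,j}} of the neighbour u in V_{i+1} whose coordinate c(i) equals x.
  The paper leaves this bijection unspecified, so it is an arbitrary valid one.\<close>
definition valid_labeling :: "nat \<Rightarrow> nat \<Rightarrow> (bool \<Rightarrow> nat \<Rightarrow> nat list \<Rightarrow> nat \<Rightarrow> nat) \<Rightarrow> bool" where
  "valid_labeling b l \<sigma> \<longleftrightarrow> (\<forall>i j. validj b l j \<longrightarrow>
      (0 < i \<and> i \<le> 2 * l \<longrightarrow> bij_betw (\<sigma> True i j) {..<2 ^ b} {..<2 ^ b}) \<and>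
      (i < 2 * l \<longrightarrow> bij_betw (\<sigma> False i j) {..<2 ^ b} {..<2 ^ b}))"

definition pnode :: "nat \<Rightarrow> nat \<Rightarrow> (bool \<Rightarrow> nat \<Rightarrow> nat list \<Rightarrow> nat \<Rightarrow> nat) \<Rightarrow>
    nat \<Rightarrow> nat list \<Rightarrow> nat list \<Rightarrow> nat \<Rightarrow> gvert" where
  "pnode b l \<sigma> i j j' t =
     (if t = 0 then TOut i j b (\<sigma> False i j (j' ! (cfun l i - 1)))
      else if t = plen b l i j j' then TIn (Suc i) j' b (\<sigma> True (Suc i) j' (j ! (cfun l i - 1)))
      else Aux i j j' t)"

definition GV :: "nat \<Rightarrow> nat \<Rightarrow> gvert set" where
  "GV b l =
     {HV i j | i j. i \<le> 2 * l \<and> validj b l j}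
   \<union> {TIn i j d p | i j d p. 0 < i \<and> i \<le> 2 * l \<and> validj b l j \<and> d \<le> b \<and> p < 2 ^ d}
   \<union> {TOut i j d p | i j d p. i < 2 * l \<and> validj b l j \<and> d \<le> b \<and> p < 2 ^ d}
   \<union> {Aux i j j' t | i j j' t. Hadj b l i j j' \<and> 0 < t \<and> t < plen b l i j j'}"

definition GB :: "nat \<Rightarrow> nat \<Rightarrow> (bool \<Rightarrow> nat \<Rightarrow> nat list \<Rightarrow> nat \<Rightarrow> nat) \<Rightarrow> (gvert \<times> gvert) set" where
  "GB b l \<sigma> =
     {(HV i j, TIn i j 0 0) | i j. 0 < i \<and> i \<le> 2 * l \<and> validj b l j}
   \<union> {(HV i j, TOut i j 0 0) | i j. i < 2 * l \<and> validj b l j}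
   \<union> {(TIn i j d p, TIn i j (Suc d) q) | i j d p q.
        0 < i \<and> i \<le> 2 * l \<and> validj b l j \<and> d < b \<and> p < 2 ^ d \<and> (q = 2 * p \<or> q = 2 * p + 1)}
   \<union> {(TOut i j d p, TOut i j (Suc d) q) | i j d p q.
        i < 2 * l \<and> validj b l j \<and> d < b \<and> p < 2 ^ d \<and> (q = 2 * p \<or> q = 2 * p + 1)}
   \<union> {(pnode b l \<sigma> i j j' t, pnode b l \<sigma> i j j' (Suc t)) | i j j' t.
        Hadj b l i j j' \<and> t < plen b l i j j'}"

definition GE :: "nat \<Rightarrow> nat \<Rightarrow> (bool \<Rightarrow> nat \<Rightarrow> nat list \<Rightarrow> nat \<Rightarrow> nat) \<Rightarrow> (gvert \<times> gvert) set" where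
  "GE b l \<sigma> = GB b l \<sigma> \<union> (GB b l \<sigma>)\<inverse>"

text \<open>Graph distance (number of edges of a shortest walk); meaningful when (u,v) \<in> E^*.\<close>
definition gdist :: "('a \<times> 'a) set \<Rightarrow> 'a \<Rightarrow> 'a \<Rightarrow> nat" where
  "gdist E u v = (LEAST n. (u, v) \<in> E ^^ n)"

definition degree :: "('a \<times> 'a) set \<Rightarrow> 'a \<Rightarrow> nat" where
  "degree E v = card {u. (v, u) \<in> E}"

definition hub_labeling :: "'a set \<Rightarrow> ('a \<times> 'a) set \<Rightarrow> ('a \<Rightarrow> 'a set) \<Rightarrow> bool" where
  "hub_labeling V E S \<longleftrightarrow> (\<forall>v\<in>V. S v \<subseteq> V) \<and>
     (\<forall>u\<in>V. \<forall>v\<in>V. (u, v) \<in> E\<^sup>* \<longrightarrow>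
        (\<exists>w\<in>S u \<inter> S v. gdist E u w + gdist E w v = gdist E u v))"

end

theory Submission
  imports Defs
begin

text \<open>
  Fix a \<in> V_0 and a' \<in> V_{2l} whose coordinates have pairwise equal parity. Coordinate k changes
  only on two layer steps, once on the way out and once on the way back, so every walk from
  v_{0,a} to v_{2l,a'} has length at least 2lA + \<Sum>_k \<lfloor>(a'_k - a_k)^2/2\<rfloor>, and this is attained by the
  route that moves each coordinate to the midpoint (a_k + a'_k)/2 and then on to a'_k. The lower bound
  is certified by a potential that is 1-Lipschitz on G; adding the mirrored potential of the other
  endpoint shows that every vertex on a shortest path lies in a tree or outgoing gadget of a vertex
  of this route. A route
  vertex in the first l layers determines a once a' is known, one in the last l layers determines a'
  once a is known. So the common hub of v_{0,a} and v_{2l,a'}, together with one endpoint, determines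
  the pair, and the 2^{bl} 2^{(b-1)l} such pairs give 2^{2bl - l - 1} hub incidences, whereas |V| is
  2^{bl} up to a factor polynomial in 2^b and l.
\<close>

definition half_sq :: "int \<Rightarrow> int" where
  "half_sq d = d\<^sup>2 div 2"

lemma half_sq_nonneg: "0 \<le> half_sq d"
  by (simp add: half_sq_def)

lemma half_sq_le_sq: "half_sq d \<le> d\<^sup>2"
proof -
  have "2 * half_sq d \<le> d\<^sup>2"
    by (simp add: half_sq_def)
  then show ?thesis
    using half_sq_nonneg[of d] by linarith
qed

lemma double_half_sq_even: "even d \<Longrightarrow> 2 * half_sq d = d\<^sup>2"
  by (auto simp: half_sq_def power2_eq_square)

lemma half_sq_le_two_steps: "half_sq (y - a) \<le> (z - a)\<^sup>2 + (y - z)\<^sup>2"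
proof -
  have "2 * ((z - a)\<^sup>2 + (y - z)\<^sup>2) = (y - a)\<^sup>2 + (2 * z - a - y)\<^sup>2"
    by (simp add: power2_eq_square algebra_simps)
  then have "(y - a)\<^sup>2 div 2 \<le> (2 * ((z - a)\<^sup>2 + (y - z)\<^sup>2)) div 2"
    by (intro zdiv_mono1) auto
  then show ?thesis
    by (simp add: half_sq_def)
qed

lemma half_sq_midpoint:
  fixes a a' :: nat
  assumes "even (a + a')"
  shows "half_sq (int a' - int a)
    = (int ((a + a') div 2) - int a)\<^sup>2 + (int ((a + a') div 2) - int a')\<^sup>2"
proof -
  define m where "m = (a + a') div 2"
  have m: "2 * int m = int a + int a'"
    using assms unfolding m_def by (metis dvd_mult_div_cancel of_nat_add of_nat_mult of_nat_numeral)
  have "2 * half_sq (int a' - int a) = (int a' - int a)\<^sup>2"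
    using assms by (intro double_half_sq_even) (simp add: even_add)
  moreover have "(int a' - int a)\<^sup>2 = 2 * ((int m - int a)\<^sup>2 + (int m - int a')\<^sup>2)"
    using m by (simp add: power2_eq_square algebra_simps)
  ultimately show ?thesis
    unfolding m_def[symmetric] by (smt (verit))
qed

lemma sq_diff_le_sq_bound:
  fixes x y :: nat
  assumes "x < 2 ^ b" "y < 2 ^ b"
  shows "(int x - int y)\<^sup>2 \<le> (2 ^ b)\<^sup>2"
proof -
  have "int x < 2 ^ b" "int y < 2 ^ b"
    using assms by simp_all
  then have "\<bar>int x - int y\<bar> \<le> 2 ^ b"
    by linarith
  then have "\<bar>int x - int y\<bar>\<^sup>2 \<le> (2 ^ b)\<^sup>2"
    by (intro power_mono) auto
  then show ?thesis
    by simp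
qed

lemma sum_lessThan_change_one:
  fixes f g :: "nat \<Rightarrow> 'a::ab_group_add"
  assumes "c < n" and "\<And>k. k < n \<Longrightarrow> k \<noteq> c \<Longrightarrow> f k = g k"
  shows "sum g {..<n} = sum f {..<n} - f c + g c"
proof -
  have "sum g ({..<n} - {c}) = sum f ({..<n} - {c})"
    using assms(2) by (intro sum.cong) auto
  then show ?thesis
    using assms(1) by (simp add: sum.remove)
qed

lemma Aconst_int: "int (Aconst b l) = 3 * int l * (2 ^ b)\<^sup>2"
  by (simp add: Aconst_def)

lemma three_sq_le_Aconst: "1 \<le> l \<Longrightarrow> 3 * (2 ^ b)\<^sup>2 \<le> int (Aconst b l)"
  by (simp add: Aconst_int)

lemma l_sq_le_Aconst: "int l * (2 ^ b)\<^sup>2 \<le> int (Aconst b l)"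
  by (simp add: Aconst_int)

lemma slack_le_sq: "1 \<le> b \<Longrightarrow> 4 * int b + 4 \<le> 2 * (2 ^ b)\<^sup>2"
proof -
  assume "1 \<le> b"
  then have two: "2 \<le> (2::int) ^ b"
    using power_increasing[of 1 b "2::int"] by simp
  have "int b < 2 ^ b"
    using less_exp[of b] by (metis of_nat_less_numeral_power_cancel_iff)
  then have "4 * int b + 4 \<le> 2 * 2 * 2 ^ b"
    by linarith
  also have "\<dots> \<le> 2 * 2 ^ b * 2 ^ b"
    using two by simp
  finally show ?thesis
    by (simp add: power2_eq_square)
qed

lemma slack_le_Aconst: "1 \<le> b \<Longrightarrow> 1 \<le> l \<Longrightarrow> 4 * b + 4 \<le> Aconst b l"
  using slack_le_sq[of b] three_sq_le_Aconst[of l b] by simp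

lemma Hweight_int:
  "int (Hweight b l i j j') = int (Aconst b l) + (int (j ! (cfun l i - 1)) - int (j' ! (cfun l i - 1)))\<^sup>2"
  by (simp add: Hweight_def)

lemma Aconst_le_Hweight: "Aconst b l \<le> Hweight b l i j j'"
proof -
  have "int (Aconst b l) \<le> int (Hweight b l i j j')"
    using Hweight_int[of b l i j j'] by simp
  then show ?thesis
    by simp
qed

lemma plen_int:
  "1 \<le> b \<Longrightarrow> 1 \<le> l \<Longrightarrow> int (plen b l i j j') = int (Hweight b l i j j') - 2 * int b - 2"
  using Aconst_le_Hweight[of b l i j j'] slack_le_Aconst[of b l] by (simp add: plen_def)

lemma validj_nth_less: "validj b l j \<Longrightarrow> k < l \<Longrightarrow> j ! k < 2 ^ b"
  by (auto simp: validj_def)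

text \<open>Layer step i moves the coordinate with list index cfun l i - 1: index i on the way out
  (i < l), index 2l - 1 - i on the way back.\<close>

lemma cfun_index_less: "i < 2 * l \<Longrightarrow> cfun l i - 1 < l"
  by (auto simp: cfun_def)

lemma cfun_index_first_half: "i < l \<Longrightarrow> cfun l i - 1 = i"
  by (auto simp: cfun_def)

lemma cfun_index_second_half: "l \<le> i \<Longrightarrow> i < 2 * l \<Longrightarrow> cfun l i - 1 = 2 * l - i - 1"
  by (auto simp: cfun_def)

lemma cfun_index_le: "i < 2 * l \<Longrightarrow> cfun l i - 1 \<le> i"
  by (auto simp: cfun_def)

lemma cfun_index_reflect: "i < 2 * l \<Longrightarrow> cfun l (2 * l - Suc i) = cfun l i"
  by (auto simp: cfun_def)

lemma Hadj_other_index: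
  assumes "Hadj b l i j j'" "k < l" "k \<noteq> cfun l i - 1"
  shows "j' ! k = j ! k" "(Suc i \<le> k) = (i \<le> k)" "(k + Suc i < 2 * l) = (k + i < 2 * l)"
proof -
  have i: "i < 2 * l"
    using assms(1) by (simp add: Hadj_def)
  show "j' ! k = j ! k"
    using assms by (simp add: Hadj_def)
  show "(Suc i \<le> k) = (i \<le> k)" "(k + Suc i < 2 * l) = (k + i < 2 * l)"
    using assms(2,3) i cfun_index_first_half[of i l] cfun_index_second_half[of l i]
    by (cases "i < l"; auto)+
qed

lemma Hadj_list_update:
  assumes "Hadj b l i j j'"
  shows "j' = j[cfun l i - 1 := j' ! (cfun l i - 1)]" and "j = j'[cfun l i - 1 := j ! (cfun l i - 1)]"
proof -
  have c: "cfun l i - 1 < l"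
    using assms cfun_index_less by (simp add: Hadj_def)
  show "j' = j[cfun l i - 1 := j' ! (cfun l i - 1)]" "j = j'[cfun l i - 1 := j ! (cfun l i - 1)]"
    by (rule nth_equalityI; use assms c in \<open>auto simp: Hadj_def validj_def nth_list_update\<close>)+
qed

lemma Hweight_le:
  assumes "Hadj b l i j j'"
  shows "Hweight b l i j j' \<le> Aconst b l + (2 ^ b)\<^sup>2"
proof -
  have c: "cfun l i - 1 < l"
    using assms cfun_index_less by (simp add: Hadj_def)
  have "int (Hweight b l i j j') \<le> int (Aconst b l + (2 ^ b)\<^sup>2)"
    using Hweight_int[of b l i j j'] assms validj_nth_less[OF _ c] sq_diff_le_sq_bound
    by (simp add: Hadj_def)
  then show ?thesis
    by (simp only: of_nat_le_iff)
qed

definition coord_cost :: "nat \<Rightarrow> nat \<Rightarrow> nat \<Rightarrow> int \<Rightarrow> int" where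
  "coord_cost l i k d = (if k + i < 2 * l then d\<^sup>2 else half_sq d)"

lemma coord_cost_nonneg: "0 \<le> coord_cost l i k d"
  by (simp add: coord_cost_def half_sq_nonneg)

lemma coord_cost_le_sq: "coord_cost l i k d \<le> d\<^sup>2"
  by (simp add: coord_cost_def half_sq_le_sq)

definition agrees_from :: "nat \<Rightarrow> nat \<Rightarrow> nat list \<Rightarrow> nat list \<Rightarrow> bool" where
  "agrees_from l i a y \<longleftrightarrow> (\<forall>k<l. i \<le> k \<longrightarrow> y ! k = a ! k)"

text \<open>A lower bound for the distance from v_{0,a} to v_{i,y}. If y agrees with a from index i on,
  coordinate k has moved at most once when k + i < 2l and at most twice otherwise, at a cost of at
  least the square, resp. half_sq (half_sq_le_two_steps), of its displacement. Otherwise the walk has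
  detoured over at least two extra layers; the slack 4b + 4 is what the second bound of pot_edge needs.\<close>

definition pot :: "nat \<Rightarrow> nat \<Rightarrow> nat list \<Rightarrow> nat \<Rightarrow> nat list \<Rightarrow> int" where
  "pot b l a i y = (if agrees_from l i a y
      then int i * int (Aconst b l) + (\<Sum>k<l. coord_cost l i k (int (y ! k) - int (a ! k)))
      else (int i + 2) * int (Aconst b l) - (4 * int b + 4))"

lemma coord_cost_sum_bounds:
  assumes "validj b l a" "validj b l y"
  shows "0 \<le> (\<Sum>k<l. coord_cost l i k (int (y ! k) - int (a ! k)))"
    and "(\<Sum>k<l. coord_cost l i k (int (y ! k) - int (a ! k))) \<le> int l * (2 ^ b)\<^sup>2"
proof -
  show "0 \<le> (\<Sum>k<l. coord_cost l i k (int (y ! k) - int (a ! k)))"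
    by (intro sum_nonneg) (simp add: coord_cost_nonneg)
  have "coord_cost l i k (int (y ! k) - int (a ! k)) \<le> (2 ^ b)\<^sup>2" if "k < l" for k
    using coord_cost_le_sq sq_diff_le_sq_bound validj_nth_less[OF assms(1) that]
      validj_nth_less[OF assms(2) that] order_trans by blast
  then have "(\<Sum>k<l. coord_cost l i k (int (y ! k) - int (a ! k))) \<le> (\<Sum>k<l. (2 ^ b)\<^sup>2)"
    by (intro sum_mono) simp
  then show "(\<Sum>k<l. coord_cost l i k (int (y ! k) - int (a ! k))) \<le> int l * (2 ^ b)\<^sup>2"
    by simp
qed

lemma pot_ge:
  assumes "validj b l a" "validj b l y" "1 \<le> b"
  shows "int i * int (Aconst b l) \<le> pot b l a i y"
proof (cases "agrees_from l i a y")
  case True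
  then show ?thesis
    using coord_cost_sum_bounds(1)[OF assms(1,2)] by (simp add: pot_def)
next
  case False
  then have "1 \<le> l"
    by (auto simp: agrees_from_def)
  then have "4 * int b + 4 \<le> 2 * int (Aconst b l)"
    using slack_le_sq[OF assms(3)] three_sq_le_Aconst[of l b] by simp
  then show ?thesis
    using False by (simp add: pot_def algebra_simps)
qed

lemma pot_step:
  assumes H: "Hadj b l i j j'" and agr: "agrees_from l i a j"
  defines "c \<equiv> cfun l i - 1"
  shows "agrees_from l (Suc i) a j'"
    and "pot b l a (Suc i) j' = pot b l a i j + int (Aconst b l)
       + coord_cost l (Suc i) c (int (j' ! c) - int (a ! c))
       - coord_cost l i c (int (j ! c) - int (a ! c))"
proof -
  have c: "c < l"
    using H cfun_index_less by (simp add: Hadj_def c_def)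
  have "k \<noteq> c" if "Suc i \<le> k" for k
    using that H cfun_index_le[of i l] by (auto simp: Hadj_def c_def)
  then show agr': "agrees_from l (Suc i) a j'"
    using agr Hadj_other_index(1)[OF H] c_def by (auto simp: agrees_from_def)
  have "(\<Sum>k<l. coord_cost l (Suc i) k (int (j' ! k) - int (a ! k)))
      = (\<Sum>k<l. coord_cost l i k (int (j ! k) - int (a ! k)))
        - coord_cost l i c (int (j ! c) - int (a ! c))
        + coord_cost l (Suc i) c (int (j' ! c) - int (a ! c))"
    using c Hadj_other_index[OF H] c_def
    by (intro sum_lessThan_change_one) (auto simp: coord_cost_def)
  then show "pot b l a (Suc i) j' = pot b l a i j + int (Aconst b l)
       + coord_cost l (Suc i) c (int (j' ! c) - int (a ! c))
       - coord_cost l i c (int (j ! c) - int (a ! c))"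
    using agr agr' by (simp add: pot_def algebra_simps)
qed

lemma pot_edge_agreeing:
  assumes H: "Hadj b l i j j'" and agr: "agrees_from l i a j" and a: "validj b l a" and b: "1 \<le> b"
  shows "pot b l a (Suc i) j' - pot b l a i j \<le> int (Hweight b l i j j')"
    and "pot b l a i j - pot b l a (Suc i) j' \<le> int (Hweight b l i j j') - (4 * int b + 4)"
proof -
  define c where "c = cfun l i - 1"
  define A where "A = int (Aconst b l)"
  define S where "S = ((2::int) ^ b)\<^sup>2"
  define w where "w = int (Hweight b l i j j')"
  have i: "i < 2 * l" and j: "validj b l j"
    using H by (auto simp: Hadj_def)
  have c: "c < l"
    using cfun_index_less[OF i] by (simp add: c_def)
  have A3S: "3 * S \<le> A" and KS: "4 * int b + 4 \<le> 2 * S" and S0: "0 \<le> S"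
    using three_sq_le_Aconst[of l b] slack_le_sq[OF b] i by (simp_all add: A_def S_def)
  have w: "w = A + (int (j ! c) - int (j' ! c))\<^sup>2"
    using Hweight_int by (simp add: w_def A_def c_def)
  then have wA: "A \<le> w"
    by simp
  note step = pot_step(2)[OF H agr, folded c_def A_def]
  have "pot b l a (Suc i) j' - pot b l a i j \<le> w \<and> pot b l a i j - pot b l a (Suc i) j' \<le> w - (4 * int b + 4)"
  proof (cases "i < l")
    case True
    then have "c = i"
      using cfun_index_first_half by (simp add: c_def)
    then have "j ! c = a ! c"
      using agr c by (simp add: agrees_from_def)
    then have "pot b l a (Suc i) j' - pot b l a i j = w"
      using step w \<open>c = i\<close> True by (simp add: coord_cost_def half_sq_def power2_commute)
    then show ?thesis
      using wA A3S KS S0 by linarith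
  next
    case False
    then have "c = 2 * l - i - 1"
      using cfun_index_second_half i by (simp add: c_def)
    then have "pot b l a (Suc i) j' - pot b l a i j
        = A + half_sq (int (j' ! c) - int (a ! c)) - (int (j ! c) - int (a ! c))\<^sup>2"
      using step False i by (simp add: coord_cost_def)
    moreover have "half_sq (int (j' ! c) - int (a ! c))
        \<le> (int (j ! c) - int (a ! c))\<^sup>2 + (int (j ! c) - int (j' ! c))\<^sup>2"
      using half_sq_le_two_steps power2_commute by metis
    moreover have "(int (j ! c) - int (a ! c))\<^sup>2 \<le> S"
      using sq_diff_le_sq_bound validj_nth_less c j a by (simp add: S_def)
    ultimately show ?thesis
      using w wA A3S KS S0 half_sq_nonneg[of "int (j' ! c) - int (a ! c)"] by linarith
  qed
  then show "pot b l a (Suc i) j' - pot b l a i j \<le> int (Hweight b l i j j')"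
    and "pot b l a i j - pot b l a (Suc i) j' \<le> int (Hweight b l i j j') - (4 * int b + 4)"
    by (simp_all add: w_def)
qed

lemma pot_edge_disagreeing:
  assumes H: "Hadj b l i j j'" and disagr: "\<not> agrees_from l i a j" and a: "validj b l a" and b: "1 \<le> b"
  shows "pot b l a (Suc i) j' - pot b l a i j \<le> int (Hweight b l i j j')"
    and "pot b l a i j - pot b l a (Suc i) j' \<le> int (Hweight b l i j j') - (4 * int b + 4)"
proof -
  define A where "A = int (Aconst b l)"
  define S where "S = ((2::int) ^ b)\<^sup>2"
  have i: "i < 2 * l" and j': "validj b l j'"
    using H by (auto simp: Hadj_def)
  have A3S: "3 * S \<le> A" and KS: "4 * int b + 4 \<le> 2 * S" and S0: "0 \<le> S" and lSA: "int l * S \<le> A"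
    using three_sq_le_Aconst[of l b] slack_le_sq[OF b] l_sq_le_Aconst i by (simp_all add: A_def S_def)
  have wA: "A \<le> int (Hweight b l i j j')"
    using Aconst_le_Hweight by (simp add: A_def)
  have "i < l"
    using disagr by (auto simp: agrees_from_def)
  then have off: "pot b l a i j = (int i + 2) * A - (4 * int b + 4)"
    using disagr by (simp add: pot_def A_def)
  have "pot b l a (Suc i) j' - pot b l a i j \<le> int (Hweight b l i j j')
      \<and> pot b l a i j - pot b l a (Suc i) j' \<le> int (Hweight b l i j j') - (4 * int b + 4)"
  proof (cases "agrees_from l (Suc i) a j'")
    case True
    then have "pot b l a (Suc i) j' = (int i + 1) * A + (\<Sum>k<l. coord_cost l (Suc i) k (int (j' ! k) - int (a ! k)))"
      by (simp add: pot_def A_def algebra_simps)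
    then show ?thesis
      using off coord_cost_sum_bounds[OF a j', of "Suc i"] wA lSA A3S KS S0
      by (simp add: S_def algebra_simps)
  next
    case False
    then have "pot b l a (Suc i) j' = (int i + 3) * A - (4 * int b + 4)"
      by (simp add: pot_def A_def)
    then show ?thesis
      using off wA A3S KS S0 by (simp add: algebra_simps)
  qed
  then show "pot b l a (Suc i) j' - pot b l a i j \<le> int (Hweight b l i j j')"
    and "pot b l a i j - pot b l a (Suc i) j' \<le> int (Hweight b l i j j') - (4 * int b + 4)"
    by simp_all
qed

text \<open>The asymmetric bound is what ext_pot_lipschitz needs: the extended potential rises by 2b + 2 along
  the tree edges of a gadget, leaving the w - 2b - 2 path edges for the change of pot in either direction.\<close>

lemma pot_edge:
  assumes "Hadj b l i j j'" "validj b l a" "1 \<le> b"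
  shows "pot b l a (Suc i) j' - pot b l a i j \<le> int (Hweight b l i j j')"
    and "pot b l a i j - pot b l a (Suc i) j' \<le> int (Hweight b l i j j') - (4 * int b + 4)"
  using pot_edge_agreeing[OF assms(1) _ assms(2,3)] pot_edge_disagreeing[OF assms(1) _ assms(2,3)]
  by blast+

definition route_len :: "nat \<Rightarrow> nat \<Rightarrow> nat list \<Rightarrow> nat list \<Rightarrow> int" where
  "route_len b l a a' = int (2 * l) * int (Aconst b l) + (\<Sum>k<l. half_sq (int (a' ! k) - int (a ! k)))"

definition on_route :: "nat \<Rightarrow> nat list \<Rightarrow> nat list \<Rightarrow> nat \<Rightarrow> nat list \<Rightarrow> bool" where
  "on_route l a a' i y \<longleftrightarrow> (\<forall>k<l. (k < i \<and> k + i < 2 * l \<longrightarrow> 2 * y ! k = a ! k + a' ! k)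
      \<and> (i \<le> k \<longrightarrow> y ! k = a ! k) \<and> (2 * l \<le> k + i \<longrightarrow> y ! k = a' ! k))"

lemma route_len_le:
  assumes "validj b l a" "validj b l a'"
  shows "route_len b l a a' \<le> int (2 * l) * int (Aconst b l) + int l * (2 ^ b)\<^sup>2"
proof -
  have "half_sq (int (a' ! k) - int (a ! k)) \<le> (2 ^ b)\<^sup>2" if "k < l" for k
    using half_sq_le_sq sq_diff_le_sq_bound validj_nth_less[OF assms(1) that]
      validj_nth_less[OF assms(2) that] order_trans by blast
  then have "(\<Sum>k<l. half_sq (int (a' ! k) - int (a ! k))) \<le> (\<Sum>k<l. (2 ^ b)\<^sup>2)"
    by (intro sum_mono) simp
  then show ?thesis
    by (simp add: route_len_def)
qed

lemma coord_cost_pair: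
  fixes a a' y :: nat
  assumes i: "i \<le> 2 * l" and k: "k < l"
    and first: "i \<le> k \<Longrightarrow> y = a" and second: "2 * l - i \<le> k \<Longrightarrow> y = a'"
  defines "T \<equiv> coord_cost l i k (int y - int a) + coord_cost l (2 * l - i) k (int y - int a')"
  shows "half_sq (int a' - int a) \<le> T"
    and "T = half_sq (int a' - int a) \<Longrightarrow> even (a + a') \<Longrightarrow> k < i \<Longrightarrow> k + i < 2 * l \<Longrightarrow>
      2 * y = a + a'"
proof -
  have "half_sq (int a' - int a) \<le> T \<and>
    (T = half_sq (int a' - int a) \<longrightarrow> even (a + a') \<longrightarrow> k < i \<longrightarrow> k + i < 2 * l \<longrightarrow> 2 * y = a + a')"
  proof (cases "k < i \<and> k + i < 2 * l")
    case True
    moreover have "k + (2 * l - i) < 2 * l"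
      using True i by arith
    ultimately have T: "T = (int y - int a)\<^sup>2 + (int y - int a')\<^sup>2"
      by (simp add: T_def coord_cost_def)
    have "2 * T = (int a' - int a)\<^sup>2 + (2 * int y - int a - int a')\<^sup>2"
      unfolding T by (simp add: power2_eq_square algebra_simps)
    moreover have "even (a + a') \<Longrightarrow> 2 * half_sq (int a' - int a) = (int a' - int a)\<^sup>2"
      by (intro double_half_sq_even) (simp add: even_add)
    ultimately have "T = half_sq (int a' - int a) \<Longrightarrow> even (a + a') \<Longrightarrow> 2 * y = a + a'"
      by auto
    moreover have "half_sq (int a' - int a) \<le> T"
      using half_sq_le_two_steps[of "int a'" "int a" "int y"] T by (simp add: power2_commute)
    ultimately show ?thesis
      by blast
  next
    case False
    then have "T = half_sq (int a' - int a)"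
      using i first second
      by (cases "k < i") (auto simp: T_def coord_cost_def half_sq_def power2_commute)
    then show ?thesis
      using False by simp
  qed
  then show "half_sq (int a' - int a) \<le> T"
    and "T = half_sq (int a' - int a) \<Longrightarrow> even (a + a') \<Longrightarrow> k < i \<Longrightarrow> k + i < 2 * l \<Longrightarrow>
      2 * y = a + a'"
    by blast+
qed

lemma pot_pair_off_route:
  assumes a: "validj b l a" and a': "validj b l a'" and y: "validj b l y"
    and i: "i \<le> 2 * l" and b: "1 \<le> b"
    and off: "\<not> (agrees_from l i a y \<and> agrees_from l (2 * l - i) a' y)"
  shows "route_len b l a a' < pot b l a i y + pot b l a' (2 * l - i) y"
proof -
  define A where "A = int (Aconst b l)"
  define K where "K = 4 * int b + 4"
  define S where "S = ((2::int) ^ b)\<^sup>2"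
  have "1 \<le> l"
    using off by (auto simp: agrees_from_def)
  then have A3S: "3 * S \<le> A"
    using three_sq_le_Aconst by (simp add: A_def S_def)
  have KS: "K \<le> 2 * S" and S0: "0 < S" and lSA: "int l * S \<le> A"
    using slack_le_sq[OF b] l_sq_le_Aconst by (simp_all add: K_def S_def A_def)
  have "int (2 * l) * A + 2 * A - K \<le> pot b l a i y + pot b l a' (2 * l - i) y"
  proof (cases "agrees_from l i a y")
    case True
    then have "pot b l a' (2 * l - i) y = (int (2 * l - i) + 2) * A - K"
      using off by (simp add: pot_def A_def K_def)
    then show ?thesis
      using pot_ge[OF a y b, of i] i by (simp add: A_def algebra_simps)
  next
    case False
    then have "pot b l a i y = (int i + 2) * A - K"
      by (simp add: pot_def A_def K_def)
    then show ?thesis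
      using pot_ge[OF a' y b, of "2 * l - i"] i by (simp add: A_def algebra_simps)
  qed
  then show ?thesis
    using route_len_le[OF a a', folded A_def S_def] A3S KS S0 lSA by linarith
qed

definition route_excess :: "nat \<Rightarrow> nat \<Rightarrow> nat list \<Rightarrow> nat list \<Rightarrow> nat list \<Rightarrow> nat \<Rightarrow> int" where
  "route_excess l i a a' y k = coord_cost l i k (int (y ! k) - int (a ! k))
     + coord_cost l (2 * l - i) k (int (y ! k) - int (a' ! k)) - half_sq (int (a' ! k) - int (a ! k))"

lemma pot_pair_on_route:
  assumes "i \<le> 2 * l" "agrees_from l i a y" "agrees_from l (2 * l - i) a' y"
  shows "pot b l a i y + pot b l a' (2 * l - i) y = route_len b l a a' + (\<Sum>k<l. route_excess l i a a' y k)"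
  using assms
  by (simp add: pot_def route_len_def route_excess_def sum.distrib sum_subtractf algebra_simps)

lemma route_excess_nonneg:
  assumes "i \<le> 2 * l" "k < l" "agrees_from l i a y" "agrees_from l (2 * l - i) a' y"
  shows "0 \<le> route_excess l i a a' y k"
  using coord_cost_pair(1)[OF assms(1,2)] assms(2-4) by (simp add: agrees_from_def route_excess_def)

lemma route_len_le_pot_pair:
  assumes "validj b l a" "validj b l a'" "validj b l y" and i: "i \<le> 2 * l" and "1 \<le> b"
  shows "route_len b l a a' \<le> pot b l a i y + pot b l a' (2 * l - i) y"
proof (cases "agrees_from l i a y \<and> agrees_from l (2 * l - i) a' y")
  case True
  then have "0 \<le> (\<Sum>k<l. route_excess l i a a' y k)"
    using route_excess_nonneg[OF i] by (intro sum_nonneg) simp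
  then show ?thesis
    using pot_pair_on_route[OF i] True by simp
next
  case False
  then show ?thesis
    using pot_pair_off_route[OF assms] by simp
qed

lemma pot_pair_le_route_len_imp_on_route:
  assumes a: "validj b l a" and a': "validj b l a'" and y: "validj b l y"
    and i: "i \<le> 2 * l" and b: "1 \<le> b"
    and le: "pot b l a i y + pot b l a' (2 * l - i) y \<le> route_len b l a a'"
    and even: "\<forall>k<l. even (a ! k + a' ! k)"
  shows "on_route l a a' i y"
proof -
  have agr: "agrees_from l i a y" "agrees_from l (2 * l - i) a' y"
    using pot_pair_off_route[OF a a' y i b] le by force+
  have "(\<Sum>k<l. route_excess l i a a' y k) \<le> 0"
    using le pot_pair_on_route[OF i agr, of b] by simp
  moreover have nonneg: "0 \<le> route_excess l i a a' y k" if "k < l" for k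
    using route_excess_nonneg[OF i that agr] .
  ultimately have "(\<Sum>k<l. route_excess l i a a' y k) = 0"
    by (meson lessThan_iff order_antisym sum_nonneg)
  then have "route_excess l i a a' y k = 0" if "k < l" for k
    using sum_nonneg_eq_0_iff[of "{..<l}" "route_excess l i a a' y"] nonneg that by simp
  then have "k < i \<Longrightarrow> k + i < 2 * l \<Longrightarrow> 2 * y ! k = a ! k + a' ! k" if "k < l" for k
    using coord_cost_pair(2)[OF i that, of "y ! k" "a ! k" "a' ! k"] agr even that
    by (simp add: route_excess_def agrees_from_def)
  moreover have "2 * l \<le> k + i \<Longrightarrow> y ! k = a' ! k" if "k < l" for k
    using agr(2) that by (simp add: agrees_from_def)
  ultimately show ?thesis
    using agr(1) by (auto simp: on_route_def agrees_from_def)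
qed

lemma on_route_determines_start:
  assumes "on_route l a1 a' i y" "on_route l a2 a' i y" "i \<le> l" "length a1 = l" "length a2 = l"
  shows "a1 = a2"
proof (rule nth_equalityI)
  show "length a1 = length a2"
    using assms by simp
  fix k
  assume "k < length a1"
  then have k: "k < l"
    using assms by simp
  show "a1 ! k = a2 ! k"
    using assms(1,2) k \<open>i \<le> l\<close> unfolding on_route_def
    by (cases "k < i") (fastforce, fastforce)
qed

lemma on_route_determines_end:
  assumes "on_route l a a1' i y" "on_route l a a2' i y" "l \<le> i" "length a1' = l" "length a2' = l"
  shows "a1' = a2'"
proof (rule nth_equalityI)
  show "length a1' = length a2'"
    using assms by simp
  fix k
  assume "k < length a1'"
  then have k: "k < l"
    using assms by simp
  show "a1' ! k = a2' ! k"
    using assms(1,2) k \<open>l \<le> i\<close> unfolding on_route_def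
    by (cases "2 * l \<le> k + i") (fastforce, fastforce)
qed

text \<open>The canonical route from v_{0,a} to v_{2l,a'}, a shortest one when a_k + a'_k is even for all k:
  each coordinate goes straight to the midpoint of a_k and a'_k on the way out and on to a'_k on
  the way back.\<close>

definition route :: "nat \<Rightarrow> nat list \<Rightarrow> nat list \<Rightarrow> nat \<Rightarrow> nat list" where
  "route l a a' i = map (\<lambda>k. if 2 * l \<le> k + i then a' ! k
      else if k < i then (a ! k + a' ! k) div 2 else a ! k) [0..<l]"

lemma route_nth:
  "k < l \<Longrightarrow> route l a a' i ! k
    = (if 2 * l \<le> k + i then a' ! k else if k < i then (a ! k + a' ! k) div 2 else a ! k)"
  by (simp add: route_def)

lemma length_route: "length (route l a a' i) = l"
  by (simp add: route_def)

lemma validj_route: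
  assumes "validj b l a" "validj b l a'"
  shows "validj b l (route l a a' i)"
proof -
  have "route l a a' i ! k < 2 ^ b" if "k < l" for k
    using validj_nth_less[OF assms(1) that] validj_nth_less[OF assms(2) that] that
    by (auto simp: route_nth)
  then show ?thesis
    by (auto simp: validj_def in_set_conv_nth length_route)
qed

lemma route_0: "length a = l \<Longrightarrow> route l a a' 0 = a"
  by (rule nth_equalityI) (auto simp: length_route route_nth)

lemma route_2l: "length a' = l \<Longrightarrow> route l a a' (2 * l) = a'"
  by (rule nth_equalityI) (auto simp: length_route route_nth)

lemma agrees_from_route: "agrees_from l i a (route l a a' i)"
  by (auto simp: agrees_from_def route_nth)

lemma Hadj_route:
  assumes "validj b l a" "validj b l a'" "i < 2 * l"
  shows "Hadj b l i (route l a a' i) (route l a a' (Suc i))"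
  unfolding Hadj_def
proof (intro conjI allI impI)
  show "validj b l (route l a a' i)" "validj b l (route l a a' (Suc i))"
    using validj_route assms by auto
  fix k
  assume k: "k < l" "k \<noteq> cfun l i - 1"
  have "k \<noteq> i \<or> \<not> i < l"
    using k cfun_index_first_half by auto
  moreover have "k + Suc i \<noteq> 2 * l"
    using k cfun_index_second_half[of l i] assms(3) by (cases "l \<le> i") auto
  ultimately show "route l a a' i ! k = route l a a' (Suc i) ! k"
    using k by (auto simp: route_nth)
qed (use assms in auto)

lemma pot_route_step:
  assumes a: "validj b l a" and a': "validj b l a'" and i: "i < 2 * l"
    and even: "\<forall>k<l. even (a ! k + a' ! k)"
  shows "pot b l a (Suc i) (route l a a' (Suc i))
    = pot b l a i (route l a a' i) + int (Hweight b l i (route l a a' i) (route l a a' (Suc i)))"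
proof -
  define c where "c = cfun l i - 1"
  define m where "m = (a ! c + a' ! c) div 2"
  have c: "c < l"
    using cfun_index_less[OF i] by (simp add: c_def)
  note step = pot_step(2)[OF Hadj_route[OF a a' i] agrees_from_route, folded c_def]
  note w = Hweight_int[of b l i "route l a a' i" "route l a a' (Suc i)", folded c_def]
  show ?thesis
  proof (cases "i < l")
    case True
    then have "c = i"
      using cfun_index_first_half by (simp add: c_def)
    then have "route l a a' i ! c = a ! c" "route l a a' (Suc i) ! c = m"
      using c True by (auto simp: route_nth m_def)
    then show ?thesis
      using step w \<open>c = i\<close> True by (simp add: coord_cost_def power2_commute)
  next
    case False
    then have "c = 2 * l - i - 1"
      using cfun_index_second_half i by (simp add: c_def)
    then have "route l a a' i ! c = m" "route l a a' (Suc i) ! c = a' ! c"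
      using c False i by (auto simp: route_nth m_def)
    moreover have "half_sq (int (a' ! c) - int (a ! c)) = (int m - int (a ! c))\<^sup>2 + (int m - int (a' ! c))\<^sup>2"
      unfolding m_def by (rule half_sq_midpoint) (use even c in auto)
    ultimately show ?thesis
      using step w \<open>c = 2 * l - i - 1\<close> False i by (simp add: coord_cost_def power2_commute)
  qed
qed

lemma pot_start: "length a = l \<Longrightarrow> pot b l a 0 a = 0"
  by (simp add: pot_def agrees_from_def coord_cost_def half_sq_def)

lemma pot_end: "pot b l a (2 * l) a' = route_len b l a a'"
  by (simp add: pot_def agrees_from_def coord_cost_def route_len_def)

lemma sym_relpow:
  assumes "sym R"
  shows "(x, y) \<in> R ^^ n \<Longrightarrow> (y, x) \<in> R ^^ n"
proof (induction n arbitrary: y)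
  case (Suc n)
  then obtain z where "(x, z) \<in> R ^^ n" "(z, y) \<in> R"
    by auto
  then show ?case
    using Suc.IH assms by (metis relpow_Suc_I2 symD)
qed simp

lemma gdist_relpow: "(u, v) \<in> E\<^sup>* \<Longrightarrow> (u, v) \<in> E ^^ gdist E u v"
  unfolding gdist_def by (rule LeastI_ex) (simp add: rtrancl_power)

lemma gdist_le: "(u, v) \<in> E ^^ n \<Longrightarrow> gdist E u v \<le> n"
  unfolding gdist_def by (rule Least_le)

lemma sym_GE: "sym (GE b l \<sigma>)"
  by (auto simp: GE_def sym_def)

lemma GB_subset_GE: "GB b l \<sigma> \<subseteq> GE b l \<sigma>"
  by (simp add: GE_def)

lemma validj_Hadj: "Hadj b l i j j' \<Longrightarrow> i < 2 * l \<and> validj b l j \<and> validj b l j'"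
  by (simp add: Hadj_def)

lemma valid_labeling_less:
  assumes "valid_labeling b l \<sigma>" "validj b l j" "x < 2 ^ b"
  shows "0 < i \<Longrightarrow> i \<le> 2 * l \<Longrightarrow> \<sigma> True i j x < 2 ^ b"
    and "i < 2 * l \<Longrightarrow> \<sigma> False i j x < 2 ^ b"
  using assms unfolding valid_labeling_def by (meson bij_betwE lessThan_iff)+

lemma out_tree_path:
  assumes "i < 2 * l" "validj b l j"
  shows "d \<le> b \<Longrightarrow> p < 2 ^ d \<Longrightarrow> (TOut i j 0 0, TOut i j d p) \<in> GE b l \<sigma> ^^ d"
proof (induction d arbitrary: p)
  case (Suc d)
  have "(TOut i j 0 0, TOut i j d (p div 2)) \<in> GE b l \<sigma> ^^ d"
    using Suc by simp
  moreover have "(TOut i j d (p div 2), TOut i j (Suc d) p) \<in> GE b l \<sigma>"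
    by (rule subsetD[OF GB_subset_GE]) (use assms Suc.prems in \<open>auto simp: GB_def\<close>)
  ultimately show ?case
    by (rule relpow_Suc_I)
qed simp

lemma in_tree_path:
  assumes "0 < i" "i \<le> 2 * l" "validj b l j"
  shows "d \<le> b \<Longrightarrow> p < 2 ^ d \<Longrightarrow> (TIn i j 0 0, TIn i j d p) \<in> GE b l \<sigma> ^^ d"
proof (induction d arbitrary: p)
  case (Suc d)
  have "(TIn i j 0 0, TIn i j d (p div 2)) \<in> GE b l \<sigma> ^^ d"
    using Suc by simp
  moreover have "(TIn i j d (p div 2), TIn i j (Suc d) p) \<in> GE b l \<sigma>"
    by (rule subsetD[OF GB_subset_GE]) (use assms Suc.prems in \<open>auto simp: GB_def\<close>)
  ultimately show ?case
    by (rule relpow_Suc_I)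
qed simp

lemma pnode_edge:
  "Hadj b l i j j' \<Longrightarrow> t < plen b l i j j' \<Longrightarrow>
    (pnode b l \<sigma> i j j' t, pnode b l \<sigma> i j j' (Suc t)) \<in> GB b l \<sigma>"
  unfolding GB_def by blast

lemma pnode_path:
  assumes "Hadj b l i j j'"
  shows "t \<le> plen b l i j j' \<Longrightarrow>
    (pnode b l \<sigma> i j j' 0, pnode b l \<sigma> i j j' t) \<in> GE b l \<sigma> ^^ t"
proof (induction t)
  case (Suc t)
  then have "(pnode b l \<sigma> i j j' t, pnode b l \<sigma> i j j' (Suc t)) \<in> GE b l \<sigma>"
    using subsetD[OF GB_subset_GE pnode_edge[OF assms]] by simp
  then show ?case
    using Suc by (intro relpow_Suc_I) auto
qed simp

lemma path_to_gadget:
  assumes H: "Hadj b l i j j'" and \<sigma>: "valid_labeling b l \<sigma>"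
  shows "(HV i j, pnode b l \<sigma> i j j' 0) \<in> GE b l \<sigma> ^^ Suc b"
proof -
  define p where "p = \<sigma> False i j (j' ! (cfun l i - 1))"
  have i: "i < 2 * l" and j: "validj b l j" and j': "validj b l j'"
    using H by (auto simp: Hadj_def)
  have "p < 2 ^ b"
    using valid_labeling_less(2)[OF \<sigma> j validj_nth_less[OF j' cfun_index_less[OF i]] i]
    by (simp add: p_def)
  then have "(TOut i j 0 0, TOut i j b p) \<in> GE b l \<sigma> ^^ b"
    using out_tree_path[OF i j] by simp
  moreover have "(HV i j, TOut i j 0 0) \<in> GE b l \<sigma>"
    using i j by (auto simp: GE_def GB_def)
  ultimately have "(HV i j, TOut i j b p) \<in> GE b l \<sigma> ^^ Suc b"
    by (intro relpow_Suc_I2)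
  then show ?thesis
    by (simp add: pnode_def p_def)
qed

lemma path_from_gadget:
  assumes H: "Hadj b l i j j'" and \<sigma>: "valid_labeling b l \<sigma>" and L: "plen b l i j j' \<noteq> 0"
  shows "(pnode b l \<sigma> i j j' (plen b l i j j'), HV (Suc i) j') \<in> GE b l \<sigma> ^^ Suc b"
proof -
  define q where "q = \<sigma> True (Suc i) j' (j ! (cfun l i - 1))"
  have i: "i < 2 * l" and j: "validj b l j" and j': "validj b l j'"
    using H by (auto simp: Hadj_def)
  have "q < 2 ^ b"
    using valid_labeling_less(1)[OF \<sigma> j' validj_nth_less[OF j cfun_index_less[OF i]]] i
    by (simp add: q_def)
  then have "(TIn (Suc i) j' 0 0, TIn (Suc i) j' b q) \<in> GE b l \<sigma> ^^ b"
    using in_tree_path[of "Suc i" l b j'] i j' by simp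
  moreover have "(TIn (Suc i) j' 0 0, HV (Suc i) j') \<in> GE b l \<sigma>"
    using i j' by (auto simp: GE_def GB_def)
  ultimately have "(HV (Suc i) j', TIn (Suc i) j' b q) \<in> GE b l \<sigma> ^^ Suc b"
    by (intro relpow_Suc_I2) (auto intro: symD[OF sym_GE])
  then have "(TIn (Suc i) j' b q, HV (Suc i) j') \<in> GE b l \<sigma> ^^ Suc b"
    by (rule sym_relpow[OF sym_GE])
  then show ?thesis
    using L by (simp add: pnode_def q_def)
qed

lemma gadget_path:
  assumes H: "Hadj b l i j j'" and \<sigma>: "valid_labeling b l \<sigma>" and b: "1 \<le> b"
  shows "(HV i j, HV (Suc i) j') \<in> GE b l \<sigma> ^^ Hweight b l i j j'"
proof -
  define L where "L = plen b l i j j'"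
  have "1 \<le> l"
    using H by (simp add: Hadj_def)
  then have "4 * b + 4 \<le> Hweight b l i j j'"
    using Aconst_le_Hweight[of b l i j j'] slack_le_Aconst[OF b] order_trans by blast
  then have L: "L \<noteq> 0" "Suc b + L + Suc b = Hweight b l i j j'"
    by (auto simp: L_def plen_def)
  have "(HV i j, HV (Suc i) j') \<in> GE b l \<sigma> ^^ (Suc b + L + Suc b)"
    using path_to_gadget[OF H \<sigma>] pnode_path[OF H, of L \<sigma>] path_from_gadget[OF H \<sigma>] L
    by (metis L_def order_refl relpow_trans)
  then show ?thesis
    unfolding L(2) .
qed

lemma Hadj_walk:
  assumes "\<And>i. i < n \<Longrightarrow> Hadj b l i (f i) (f (Suc i))"
    and "valid_labeling b l \<sigma>" "1 \<le> b"
  shows "(HV 0 (f 0), HV n (f n)) \<in> GE b l \<sigma> ^^ (\<Sum>i<n. Hweight b l i (f i) (f (Suc i)))"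
  using assms(1)
proof (induction n)
  case (Suc n)
  then show ?case
    using gadget_path[OF Suc.prems assms(2,3)] relpow_trans by fastforce
qed simp

lemma route_walk:
  assumes a: "validj b l a" and a': "validj b l a'" and even: "\<forall>k<l. even (a ! k + a' ! k)"
    and \<sigma>: "valid_labeling b l \<sigma>" and b: "1 \<le> b"
  shows "(HV 0 a, HV (2 * l) a') \<in> GE b l \<sigma> ^^ nat (route_len b l a a')"
proof -
  have len: "length a = l" "length a' = l"
    using a a' by (simp_all add: validj_def)
  have "n \<le> 2 * l \<Longrightarrow> pot b l a n (route l a a' n)
      = (\<Sum>i<n. int (Hweight b l i (route l a a' i) (route l a a' (Suc i))))" for n
    by (induction n) (simp_all add: pot_start route_0 len pot_route_step[OF a a' _ even])
  from this[of "2 * l"] have "route_len b l a a'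
      = int (\<Sum>i<2 * l. Hweight b l i (route l a a' i) (route l a a' (Suc i)))"
    using pot_end[of b l a a'] route_2l[OF len(2)] by simp
  moreover have "(HV 0 a, HV (2 * l) a') \<in> GE b l \<sigma> ^^
      (\<Sum>i<2 * l. Hweight b l i (route l a a' i) (route l a a' (Suc i)))"
    using Hadj_walk[of "2 * l" b l "route l a a'", OF Hadj_route[OF a a'] \<sigma> b]
    by (simp add: route_0 route_2l len)
  ultimately show ?thesis
    by (metis nat_int)
qed

lemma reach_HV:
  assumes a: "validj b l a" and y: "validj b l y" and \<sigma>: "valid_labeling b l \<sigma>" and b: "1 \<le> b"
    and i: "i \<le> 2 * l"
  shows "(HV 0 a, HV i y) \<in> (GE b l \<sigma>)\<^sup>*"
proof -
  have walk: "(HV 0 (f 0), HV n (f n)) \<in> (GE b l \<sigma>)\<^sup>*"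
    if "\<And>i. i < n \<Longrightarrow> Hadj b l i (f i) (f (Suc i))" for n f
    using Hadj_walk[OF that \<sigma> b] relpow_imp_rtrancl by blast
  have len: "length a = l" "length y = l"
    using a y by (simp_all add: validj_def)
  have "(HV 0 a, HV (2 * l) y) \<in> (GE b l \<sigma>)\<^sup>*"
    using walk[of "2 * l" "route l a y"] Hadj_route[OF a y] by (simp add: route_0 route_2l len)
  moreover have "(HV 0 y, HV n y) \<in> (GE b l \<sigma>)\<^sup>*" if "n \<le> 2 * l" for n
    using walk[of n "\<lambda>_. y"] that y by (simp add: Hadj_def)
  ultimately show ?thesis
    using i symD[OF sym_rtrancl[OF sym_GE]] by (meson order_refl rtrancl_trans)
qed

fun owner :: "gvert \<Rightarrow> nat \<times> nat list" where
  "owner (HV i j) = (i, j)"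
| "owner (TIn i j d p) = (i, j)"
| "owner (TOut i j d p) = (i, j)"
| "owner (Aux i j j' t) = (i, j)"

lemma owner_in_layers: "w \<in> GV b l \<Longrightarrow> fst (owner w) \<le> 2 * l \<and> validj b l (snd (owner w))"
  unfolding GV_def by (auto simp: Hadj_def)

lemma owner_reaches:
  assumes \<sigma>: "valid_labeling b l \<sigma>" and w: "w \<in> GV b l"
  shows "\<exists>n. (HV (fst (owner w)) (snd (owner w)), w) \<in> GE b l \<sigma> ^^ n"
proof -
  consider (hv) i j where "w = HV i j"
    | (tin) i j d p where "w = TIn i j d p" "0 < i" "i \<le> 2 * l" "validj b l j" "d \<le> b" "p < 2 ^ d"
    | (tout) i j d p where "w = TOut i j d p" "i < 2 * l" "validj b l j" "d \<le> b" "p < 2 ^ d"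
    | (aux) i j j' t where "w = Aux i j j' t" "Hadj b l i j j'" "0 < t" "t < plen b l i j j'"
    using w unfolding GV_def by blast
  then show ?thesis
  proof cases
    case hv
    then have "(HV (fst (owner w)) (snd (owner w)), w) \<in> GE b l \<sigma> ^^ 0"
      by simp
    then show ?thesis ..
  next
    case tin
    then have "(HV i j, TIn i j 0 0) \<in> GE b l \<sigma>"
      by (auto simp: GE_def GB_def)
    moreover have "(TIn i j 0 0, w) \<in> GE b l \<sigma> ^^ d"
      using in_tree_path[of i l b j d p \<sigma>] tin by simp
    ultimately have "(HV i j, w) \<in> GE b l \<sigma> ^^ Suc d"
      by (rule relpow_Suc_I2)
    then show ?thesis
      using tin(1) by (intro exI[of _ "Suc d"]) simp
  next
    case tout
    then have "(HV i j, TOut i j 0 0) \<in> GE b l \<sigma>"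
      by (auto simp: GE_def GB_def)
    moreover have "(TOut i j 0 0, w) \<in> GE b l \<sigma> ^^ d"
      using out_tree_path[of i l b j d p \<sigma>] tout by simp
    ultimately have "(HV i j, w) \<in> GE b l \<sigma> ^^ Suc d"
      by (rule relpow_Suc_I2)
    then show ?thesis
      using tout(1) by (intro exI[of _ "Suc d"]) simp
  next
    case aux
    have "(pnode b l \<sigma> i j j' 0, w) \<in> GE b l \<sigma> ^^ t"
      using pnode_path[OF aux(2), of t \<sigma>] aux by (simp add: pnode_def)
    with path_to_gadget[OF aux(2) \<sigma>] have "(HV i j, w) \<in> GE b l \<sigma> ^^ (Suc b + t)"
      by (rule relpow_trans)
    then show ?thesis
      using aux(1) by (intro exI[of _ "Suc b + t"]) simp
  qed
qed

lemma reach_GV: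
  assumes a: "validj b l a" and \<sigma>: "valid_labeling b l \<sigma>" and b: "1 \<le> b" and w: "w \<in> GV b l"
  shows "(HV 0 a, w) \<in> (GE b l \<sigma>)\<^sup>*"
  using reach_HV[OF a _ \<sigma> b] owner_in_layers[OF w] owner_reaches[OF \<sigma> w]
  by (meson relpow_imp_rtrancl rtrancl_trans)

text \<open>Extension of a layer potential g to G: it changes by e per tree level, and along a gadget
  path it is the smaller of the two extrapolations from the ends, i.e. the McShane extension,
  which stays 1-Lipschitz as long as the two ends are compatible (hypothesis of ext_pot_lipschitz).\<close>

definition ext_pot :: "int \<Rightarrow> (nat \<Rightarrow> nat list \<Rightarrow> int) \<Rightarrow> nat \<Rightarrow> nat \<Rightarrow> gvert \<Rightarrow> int" where
  "ext_pot e g b l w = (case w of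
       HV i j \<Rightarrow> g i j
     | TIn i j d p \<Rightarrow> g i j - e * (int d + 1)
     | TOut i j d p \<Rightarrow> g i j + e * (int d + 1)
     | Aux i j j' t \<Rightarrow> min (g i j + e * (int b + 1) + int t)
          (g (Suc i) j' - e * (int b + 1) + (int (plen b l i j j') - int t)))"

lemma ext_pot_pnode:
  assumes "\<bar>g (Suc i) j' - g i j - 2 * e * (int b + 1)\<bar> \<le> int (plen b l i j j')"
    and "t \<le> plen b l i j j'"
  shows "ext_pot e g b l (pnode b l \<sigma> i j j' t) = min (g i j + e * (int b + 1) + int t)
    (g (Suc i) j' - e * (int b + 1) + (int (plen b l i j j') - int t))"
  using assms by (auto simp: pnode_def ext_pot_def)

lemma ext_pot_lipschitz:
  assumes e: "\<bar>e\<bar> = 1"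
    and compat: "\<And>i j j'. Hadj b l i j j' \<Longrightarrow>
      \<bar>g (Suc i) j' - g i j - 2 * e * (int b + 1)\<bar> \<le> int (plen b l i j j')"
    and xy: "(x, y) \<in> GE b l \<sigma>"
  shows "\<bar>ext_pot e g b l x - ext_pot e g b l y\<bar> \<le> 1"
proof -
  have "\<bar>ext_pot e g b l x - ext_pot e g b l y\<bar> \<le> 1" if "(x, y) \<in> GB b l \<sigma>" for x y
  proof -
    have gadget: ?thesis if "x = pnode b l \<sigma> i j j' t" "y = pnode b l \<sigma> i j j' (Suc t)"
      "Hadj b l i j j'" "t < plen b l i j j'" for i j j' t
      using that ext_pot_pnode[OF compat[OF that(3)], of t \<sigma>]
        ext_pot_pnode[OF compat[OF that(3)], of "Suc t" \<sigma>] by auto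
    show ?thesis
      using \<open>(x, y) \<in> GB b l \<sigma>\<close> e gadget unfolding GB_def by (auto simp: ext_pot_def algebra_simps)
  qed
  then show ?thesis
    using xy unfolding GE_def by (metis Un_iff abs_minus_commute converseD)
qed

lemma lipschitz_relpow:
  fixes f :: "'a \<Rightarrow> int"
  assumes "\<And>x y. (x, y) \<in> R \<Longrightarrow> \<bar>f x - f y\<bar> \<le> 1"
  shows "(x, y) \<in> R ^^ n \<Longrightarrow> \<bar>f x - f y\<bar> \<le> int n"
proof (induction n arbitrary: y)
  case (Suc n)
  then obtain z where "(x, z) \<in> R ^^ n" "(z, y) \<in> R"
    by auto
  then show ?case
    using Suc.IH assms by fastforce
qed simp

definition pot_rev :: "nat \<Rightarrow> nat \<Rightarrow> nat list \<Rightarrow> nat \<Rightarrow> nat list \<Rightarrow> int" where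
  "pot_rev b l a' i y = pot b l a' (2 * l - i) y"

lemma Hadj_reflect:
  assumes "Hadj b l i j j'"
  shows "Hadj b l (2 * l - Suc i) j' j" and "Hweight b l (2 * l - Suc i) j' j = Hweight b l i j j'"
proof -
  have i: "i < 2 * l"
    using assms by (simp add: Hadj_def)
  show "Hadj b l (2 * l - Suc i) j' j"
    using assms cfun_index_reflect[OF i] i by (auto simp: Hadj_def)
  show "Hweight b l (2 * l - Suc i) j' j = Hweight b l i j j'"
    using cfun_index_reflect[OF i] by (simp add: Hweight_def power2_commute)
qed

lemma pot_rev_edge:
  assumes H: "Hadj b l i j j'" and a': "validj b l a'" and b: "1 \<le> b"
  shows "pot_rev b l a' i j - pot_rev b l a' (Suc i) j' \<le> int (Hweight b l i j j')"
    and "pot_rev b l a' (Suc i) j' - pot_rev b l a' i j \<le> int (Hweight b l i j j') - (4 * int b + 4)"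
proof -
  have "i < 2 * l"
    using H by (simp add: Hadj_def)
  then have "Suc (2 * l - Suc i) = 2 * l - i"
    by arith
  then show "pot_rev b l a' i j - pot_rev b l a' (Suc i) j' \<le> int (Hweight b l i j j')"
    and "pot_rev b l a' (Suc i) j' - pot_rev b l a' i j \<le> int (Hweight b l i j j') - (4 * int b + 4)"
    using pot_edge[OF Hadj_reflect(1)[OF H] a' b] Hadj_reflect(2)[OF H] by (simp_all add: pot_rev_def)
qed

lemma ext_pot_pair_le_imp_pot_pair_le:
  assumes a: "validj b l a" and a': "validj b l a'" and b: "1 \<le> b" and w: "w \<in> GV b l"
    and le: "ext_pot 1 (pot b l a) b l w + ext_pot (-1) (pot_rev b l a') b l w \<le> route_len b l a a'"
  shows "pot b l a (fst (owner w)) (snd (owner w)) + pot_rev b l a' (fst (owner w)) (snd (owner w))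
    \<le> route_len b l a a'"
proof -
  consider (layer) "\<not> (\<exists>i j j' t. w = Aux i j j' t)"
    | (aux) i j j' t where "w = Aux i j j' t" "Hadj b l i j j'" "0 < t" "t < plen b l i j j'"
    using w unfolding GV_def by blast
  then show ?thesis
  proof cases
    case layer
    then show ?thesis
      using le by (cases w) (auto simp: ext_pot_def)
  next
    case aux
    have i: "i < 2 * l" and j: "validj b l j" and j': "validj b l j'"
      using validj_Hadj[OF aux(2)] by auto
    define L where "L = int (plen b l i j j')"
    have L: "L = int (Hweight b l i j j') - 2 * int b - 2"
      using plen_int[OF b] i by (simp add: L_def)
    have "route_len b l a a' \<le> pot b l a (Suc i) j' + pot_rev b l a' (Suc i) j'"
      using route_len_le_pot_pair[OF a a' j', of "Suc i"] i b by (simp add: pot_rev_def)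
    moreover have "pot b l a i j - pot b l a (Suc i) j' \<le> int (Hweight b l i j j') - (4 * int b + 4)"
      using pot_edge(2)[OF aux(2) a b] .
    moreover have "pot_rev b l a' i j - pot_rev b l a' (Suc i) j' \<le> int (Hweight b l i j j')"
      using pot_rev_edge(1)[OF aux(2) a' b] .
    moreover have "0 < int t" "int t < L"
      using aux by (simp_all add: L_def)
    moreover have "ext_pot 1 (pot b l a) b l w
        = min (pot b l a i j + (int b + 1) + int t) (pot b l a (Suc i) j' - (int b + 1) + (L - int t))"
      "ext_pot (-1) (pot_rev b l a') b l w
        = min (pot_rev b l a' i j - (int b + 1) + int t) (pot_rev b l a' (Suc i) j' + (int b + 1) + (L - int t))"
      using aux by (simp_all add: ext_pot_def L_def)
    ultimately have "pot b l a i j + pot_rev b l a' i j \<le> route_len b l a a'"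
      using le L by (simp add: min_def split: if_splits; linarith)
    then show ?thesis
      using aux by simp
  qed
qed

lemma ext_pot_pot_lipschitz:
  assumes a: "validj b l a" and b: "1 \<le> b" and xy: "(x, y) \<in> GE b l \<sigma>"
  shows "\<bar>ext_pot 1 (pot b l a) b l x - ext_pot 1 (pot b l a) b l y\<bar> \<le> 1"
proof (rule ext_pot_lipschitz[OF _ _ xy])
  show "\<bar>pot b l a (Suc i) j' - pot b l a i j - 2 * 1 * (int b + 1)\<bar> \<le> int (plen b l i j j')"
    if "Hadj b l i j j'" for i j j'
    using pot_edge[OF that a b] plen_int[OF b, of l i j j'] that by (simp add: Hadj_def)
qed simp

lemma ext_pot_pot_rev_lipschitz:
  assumes a': "validj b l a'" and b: "1 \<le> b" and xy: "(x, y) \<in> GE b l \<sigma>"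
  shows "\<bar>ext_pot (-1) (pot_rev b l a') b l x - ext_pot (-1) (pot_rev b l a') b l y\<bar> \<le> 1"
proof (rule ext_pot_lipschitz[OF _ _ xy])
  show "\<bar>pot_rev b l a' (Suc i) j' - pot_rev b l a' i j - 2 * - 1 * (int b + 1)\<bar> \<le> int (plen b l i j j')"
    if "Hadj b l i j j'" for i j j'
    using pot_rev_edge[OF that a' b] plen_int[OF b, of l i j j'] that by (simp add: Hadj_def)
qed simp

text \<open>F and P below are 1-Lipschitz and vanish at v_{0,a} and v_{2l,a'} respectively, so on a
  geodesic F w + P w is at most its length, which route_walk bounds by route_len.\<close>

lemma shortest_path_owner_on_route:
  assumes a: "validj b l a" and a': "validj b l a'" and even: "\<forall>k<l. even (a ! k + a' ! k)"
    and \<sigma>: "valid_labeling b l \<sigma>" and b: "1 \<le> b" and w: "w \<in> GV b l"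
    and geodesic: "gdist (GE b l \<sigma>) (HV 0 a) w + gdist (GE b l \<sigma>) w (HV (2 * l) a')
      = gdist (GE b l \<sigma>) (HV 0 a) (HV (2 * l) a')"
  shows "on_route l a a' (fst (owner w)) (snd (owner w))"
proof -
  define E where "E = GE b l \<sigma>"
  define u where "u = HV 0 a"
  define v where "v = HV (2 * l) a'"
  define F where "F = ext_pot 1 (pot b l a) b l"
  define P where "P = ext_pot (-1) (pot_rev b l a') b l"
  have uw: "(u, w) \<in> E\<^sup>*"
    using reach_GV[OF a \<sigma> b w] by (simp add: u_def E_def)
  have "(u, v) \<in> E\<^sup>*"
    using reach_GV[OF a \<sigma> b] a' by (simp add: u_def v_def E_def GV_def)
  then have wv: "(w, v) \<in> E\<^sup>*"
    using uw symD[OF sym_rtrancl[OF sym_GE]] unfolding E_def by (meson rtrancl_trans)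
  have F: "\<bar>F x - F y\<bar> \<le> 1" if "(x, y) \<in> E" for x y
    using ext_pot_pot_lipschitz[OF a b] that by (simp add: F_def E_def)
  have P: "\<bar>P x - P y\<bar> \<le> 1" if "(x, y) \<in> E" for x y
    using ext_pot_pot_rev_lipschitz[OF a' b] that by (simp add: P_def E_def)
  have "F u = 0" "P v = 0"
    using a a' by (simp_all add: F_def P_def u_def v_def ext_pot_def pot_rev_def pot_start validj_def)
  moreover have "\<bar>F u - F w\<bar> \<le> int (gdist E u w)" "\<bar>P w - P v\<bar> \<le> int (gdist E w v)"
    using lipschitz_relpow[of E F, OF F gdist_relpow[OF uw]] lipschitz_relpow[of E P, OF P gdist_relpow[OF wv]]
    by simp_all
  moreover have "gdist E u v \<le> nat (route_len b l a a')"
    using gdist_le[OF route_walk[OF a a' even \<sigma> b]] by (simp add: E_def u_def v_def)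
  moreover have "0 \<le> route_len b l a a'"
    by (simp add: route_len_def sum_nonneg half_sq_nonneg)
  ultimately have "F w + P w \<le> route_len b l a a'"
    using geodesic unfolding E_def u_def v_def by linarith
  then show ?thesis
    using ext_pot_pair_le_imp_pot_pair_le[OF a a' b w] owner_in_layers[OF w] even
      pot_pair_le_route_len_imp_on_route[OF a a' _ _ b]
    by (simp add: F_def P_def pot_rev_def)
qed

lemma pnode_neq_HV [simp]: "pnode b l \<sigma> i j j' t \<noteq> HV i' y" "HV i' y \<noteq> pnode b l \<sigma> i j j' t"
  by (auto simp: pnode_def)

lemma pnode_eq_TOutD:
  "pnode b l \<sigma> i j j' t = TOut i' y d p \<Longrightarrow>
    t = 0 \<and> i' = i \<and> y = j \<and> d = b \<and> p = \<sigma> False i j (j' ! (cfun l i - 1))"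
  by (auto simp: pnode_def split: if_splits)

lemma pnode_eq_TInD:
  "pnode b l \<sigma> i j j' t = TIn i' y d p \<Longrightarrow>
    t \<noteq> 0 \<and> t = plen b l i j j' \<and> i' = Suc i \<and> y = j' \<and> d = b \<and> p = \<sigma> True (Suc i) j' (j ! (cfun l i - 1))"
  by (auto simp: pnode_def split: if_splits)

lemma pnode_eq_AuxD:
  "pnode b l \<sigma> i j j' t = Aux i' y y' t' \<Longrightarrow>
    t \<noteq> 0 \<and> t \<noteq> plen b l i j j' \<and> i' = i \<and> y = j \<and> y' = j' \<and> t' = t"
  by (auto simp: pnode_def split: if_splits)

lemma degree_GE_eq: "degree (GE b l \<sigma>) w = card {u. (w, u) \<in> GB b l \<sigma> \<or> (u, w) \<in> GB b l \<sigma>}"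
  by (simp add: degree_def GE_def)

lemma card_le_3_if_subset: "N \<subseteq> {x, y, z} \<Longrightarrow> card N \<le> 3"
proof -
  assume "N \<subseteq> {x, y, z}"
  moreover have "card {x, y, z} \<le> 3"
    by (auto simp: card_insert_if)
  ultimately show ?thesis
    using card_mono[of "{x, y, z}" N] by simp
qed

lemma degree_HV: "degree (GE b l \<sigma>) (HV i j) \<le> 3"
proof -
  have "{u. (HV i j, u) \<in> GB b l \<sigma> \<or> (u, HV i j) \<in> GB b l \<sigma>} \<subseteq> {TIn i j 0 0, TOut i j 0 0, TOut i j 0 0}"
    by (auto simp: GB_def)
  then show ?thesis
    unfolding degree_GE_eq by (rule card_le_3_if_subset)
qed

lemma degree_Aux: "degree (GE b l \<sigma>) (Aux i j j' t) \<le> 3"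
proof -
  have "{u. (Aux i j j' t, u) \<in> GB b l \<sigma> \<or> (u, Aux i j j' t) \<in> GB b l \<sigma>}
     \<subseteq> {pnode b l \<sigma> i j j' (t - 1), pnode b l \<sigma> i j j' (Suc t), pnode b l \<sigma> i j j' (Suc t)}"
    unfolding GB_def by (auto dest!: pnode_eq_AuxD[OF sym] pnode_eq_AuxD)
  then show ?thesis
    unfolding degree_GE_eq by (rule card_le_3_if_subset)
qed

lemma degree_TIn_inner:
  assumes "d < b"
  shows "degree (GE b l \<sigma>) (TIn i j d p) \<le> 3"
proof -
  have "{u. (TIn i j d p, u) \<in> GB b l \<sigma> \<or> (u, TIn i j d p) \<in> GB b l \<sigma>}
     \<subseteq> {if d = 0 then HV i j else TIn i j (d - 1) (p div 2), TIn i j (Suc d) (2 * p), TIn i j (Suc d) (2 * p + 1)}"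
    unfolding GB_def using assms by (auto dest!: pnode_eq_TInD[OF sym] pnode_eq_TInD)
  then show ?thesis
    unfolding degree_GE_eq by (rule card_le_3_if_subset)
qed

lemma degree_TOut_inner:
  assumes "d < b"
  shows "degree (GE b l \<sigma>) (TOut i j d p) \<le> 3"
proof -
  have "{u. (TOut i j d p, u) \<in> GB b l \<sigma> \<or> (u, TOut i j d p) \<in> GB b l \<sigma>}
     \<subseteq> {if d = 0 then HV i j else TOut i j (d - 1) (p div 2), TOut i j (Suc d) (2 * p), TOut i j (Suc d) (2 * p + 1)}"
    unfolding GB_def using assms by (auto dest!: pnode_eq_TOutD[OF sym] pnode_eq_TOutD)
  then show ?thesis
    unfolding degree_GE_eq by (rule card_le_3_if_subset)
qed

text \<open>Since the leaf labelling is a bijection, a leaf of a tree is the end of at most one gadget path.\<close>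

lemma gadget_into_leaf_unique:
  assumes \<sigma>: "valid_labeling b l \<sigma>" and H: "Hadj b l i y j"
    and q: "\<sigma> True (Suc i) j (y ! (cfun l i - 1)) = q"
  shows "y = j[cfun l i - 1 := inv_into {..<2 ^ b} (\<sigma> True (Suc i) j) q]"
proof -
  have i: "i < 2 * l" and y: "validj b l y" and j: "validj b l j"
    using H by (auto simp: Hadj_def)
  have "inv_into {..<2 ^ b} (\<sigma> True (Suc i) j) q = y ! (cfun l i - 1)"
    using \<sigma> j validj_nth_less[OF y cfun_index_less[OF i]] i q unfolding valid_labeling_def bij_betw_def
    by (auto intro: inv_into_f_f)
  then show ?thesis
    using Hadj_list_update(2)[OF H] by simp
qed

lemma gadget_out_of_leaf_unique:
  assumes \<sigma>: "valid_labeling b l \<sigma>" and H: "Hadj b l i j y"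
    and p: "\<sigma> False i j (y ! (cfun l i - 1)) = p"
  shows "y = j[cfun l i - 1 := inv_into {..<2 ^ b} (\<sigma> False i j) p]"
proof -
  have i: "i < 2 * l" and y: "validj b l y" and j: "validj b l j"
    using H by (auto simp: Hadj_def)
  have "inv_into {..<2 ^ b} (\<sigma> False i j) p = y ! (cfun l i - 1)"
    using \<sigma> j validj_nth_less[OF y cfun_index_less[OF i]] i p unfolding valid_labeling_def bij_betw_def
    by (auto intro: inv_into_f_f)
  then show ?thesis
    using Hadj_list_update(1)[OF H] by simp
qed

lemma degree_TIn_leaf:
  assumes \<sigma>: "valid_labeling b l \<sigma>" and b: "1 \<le> b"
  shows "degree (GE b l \<sigma>) (TIn i j b p) \<le> 3"
proof -
  define y where "y = j[cfun l (i - 1) - 1 := inv_into {..<2 ^ b} (\<sigma> True i j) p]"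
  define parent where "parent = TIn i j (b - 1) (p div 2)"
  define last where "last = pnode b l \<sigma> (i - 1) y j (plen b l (i - 1) y j - 1)"
  have "{u. (TIn i j b p, u) \<in> GB b l \<sigma> \<or> (u, TIn i j b p) \<in> GB b l \<sigma>} \<subseteq> {parent, last, last}"
  proof
    fix u
    assume "u \<in> {u. (TIn i j b p, u) \<in> GB b l \<sigma> \<or> (u, TIn i j b p) \<in> GB b l \<sigma>}"
    then have "u = parent \<or> (\<exists>i' y' t. u = pnode b l \<sigma> i' y' j t \<and> Hadj b l i' y' j
        \<and> Suc t = plen b l i' y' j \<and> i = Suc i' \<and> p = \<sigma> True (Suc i') j (y' ! (cfun l i' - 1)))"
      unfolding GB_def parent_def using b by (auto dest!: pnode_eq_TInD[OF sym] pnode_eq_TInD) blast+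
    then show "u \<in> {parent, last, last}"
    proof
      assume "\<exists>i' y' t. u = pnode b l \<sigma> i' y' j t \<and> Hadj b l i' y' j
        \<and> Suc t = plen b l i' y' j \<and> i = Suc i' \<and> p = \<sigma> True (Suc i') j (y' ! (cfun l i' - 1))"
      then obtain i' y' t where u: "u = pnode b l \<sigma> i' y' j t" "Hadj b l i' y' j"
        "Suc t = plen b l i' y' j" "i = Suc i'" "p = \<sigma> True (Suc i') j (y' ! (cfun l i' - 1))"
        by blast
      have "y' = y"
        using gadget_into_leaf_unique[OF \<sigma> u(2) u(5)[symmetric]] u(4) by (simp add: y_def)
      moreover have "t = plen b l i' y' j - 1"
        using u(3) by simp
      ultimately show ?thesis
        using u(1,4) by (simp add: last_def)
    qed simp
  qed
  then show ?thesis
    unfolding degree_GE_eq by (rule card_le_3_if_subset)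
qed

lemma degree_TOut_leaf:
  assumes \<sigma>: "valid_labeling b l \<sigma>" and b: "1 \<le> b"
  shows "degree (GE b l \<sigma>) (TOut i j b p) \<le> 3"
proof -
  define y where "y = j[cfun l i - 1 := inv_into {..<2 ^ b} (\<sigma> False i j) p]"
  define parent where "parent = TOut i j (b - 1) (p div 2)"
  define first where "first = pnode b l \<sigma> i j y 1"
  have "{u. (TOut i j b p, u) \<in> GB b l \<sigma> \<or> (u, TOut i j b p) \<in> GB b l \<sigma>} \<subseteq> {parent, first, first}"
  proof
    fix u
    assume "u \<in> {u. (TOut i j b p, u) \<in> GB b l \<sigma> \<or> (u, TOut i j b p) \<in> GB b l \<sigma>}"
    then have "u = parent \<or> (\<exists>y'. u = pnode b l \<sigma> i j y' 1 \<and> Hadj b l i j y'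
        \<and> p = \<sigma> False i j (y' ! (cfun l i - 1)))"
      unfolding GB_def parent_def using b by (auto dest!: pnode_eq_TOutD[OF sym] pnode_eq_TOutD)
    then show "u \<in> {parent, first, first}"
    proof
      assume "\<exists>y'. u = pnode b l \<sigma> i j y' 1 \<and> Hadj b l i j y' \<and> p = \<sigma> False i j (y' ! (cfun l i - 1))"
      then obtain y' where u: "u = pnode b l \<sigma> i j y' 1" "Hadj b l i j y'"
        "p = \<sigma> False i j (y' ! (cfun l i - 1))"
        by blast
      have "y' = y"
        using gadget_out_of_leaf_unique[OF \<sigma> u(2) u(3)[symmetric]] by (simp add: y_def)
      then show ?thesis
        using u by (simp add: first_def)
    qed simp
  qed
  then show ?thesis
    unfolding degree_GE_eq by (rule card_le_3_if_subset)
qed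

lemma degree_le_3:
  assumes \<sigma>: "valid_labeling b l \<sigma>" and b: "1 \<le> b" and w: "w \<in> GV b l"
  shows "degree (GE b l \<sigma>) w \<le> 3"
proof -
  consider (hv) i j where "w = HV i j"
    | (tin) i j d p where "w = TIn i j d p" "d \<le> b"
    | (tout) i j d p where "w = TOut i j d p" "d \<le> b"
    | (aux) i j j' t where "w = Aux i j j' t"
    using w unfolding GV_def by blast
  then show ?thesis
  proof cases
    case tin
    then show ?thesis
      using degree_TIn_inner degree_TIn_leaf[OF \<sigma> b] by (cases "d < b") auto
  next
    case tout
    then show ?thesis
      using degree_TOut_inner degree_TOut_leaf[OF \<sigma> b] by (cases "d < b") auto
  qed (simp_all add: degree_HV degree_Aux)
qed

lemma degree_out_root:
  assumes b: "1 \<le> b" and l: "1 \<le> l"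
  shows "TOut 0 (replicate l 0) 0 0 \<in> GV b l" and "degree (GE b l \<sigma>) (TOut 0 (replicate l 0) 0 0) = 3"
proof -
  define r where "r = replicate l (0::nat)"
  have r: "validj b l r"
    by (simp add: r_def validj_def)
  show "TOut 0 (replicate l 0) 0 0 \<in> GV b l"
    using r l unfolding r_def GV_def by auto
  have "{u. (TOut 0 r 0 0, u) \<in> GB b l \<sigma> \<or> (u, TOut 0 r 0 0) \<in> GB b l \<sigma>} = {HV 0 r, TOut 0 r 1 0, TOut 0 r 1 1}"
  proof
    show "{u. (TOut 0 r 0 0, u) \<in> GB b l \<sigma> \<or> (u, TOut 0 r 0 0) \<in> GB b l \<sigma>} \<subseteq> {HV 0 r, TOut 0 r 1 0, TOut 0 r 1 1}"
      unfolding GB_def using b by (auto dest!: pnode_eq_TOutD[OF sym] pnode_eq_TOutD)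
    show "{HV 0 r, TOut 0 r 1 0, TOut 0 r 1 1} \<subseteq> {u. (TOut 0 r 0 0, u) \<in> GB b l \<sigma> \<or> (u, TOut 0 r 0 0) \<in> GB b l \<sigma>}"
      unfolding GB_def using b l r by auto
  qed
  then show "degree (GE b l \<sigma>) (TOut 0 (replicate l 0) 0 0) = 3"
    by (simp add: degree_GE_eq r_def)
qed

definition coord_vectors :: "nat \<Rightarrow> nat \<Rightarrow> nat list set" where
  "coord_vectors b l = {xs. set xs \<subseteq> {..<2 ^ b} \<and> length xs = l}"

lemma mem_coord_vectors_iff: "j \<in> coord_vectors b l \<longleftrightarrow> validj b l j"
  by (auto simp: coord_vectors_def validj_def)

lemma finite_coord_vectors: "finite (coord_vectors b l)"
  unfolding coord_vectors_def by (rule finite_lists_length_eq) simp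

lemma card_coord_vectors: "card (coord_vectors b l) = (2 ^ b) ^ l"
  unfolding coord_vectors_def by (simp add: card_lists_length_eq)

lemma GV_subset:
  "GV b l \<subseteq>
      (\<lambda>(i, j). HV i j) ` ({..2 * l} \<times> coord_vectors b l)
    \<union> (\<lambda>(i, j, d, p). TIn i j d p) ` ({..2 * l} \<times> coord_vectors b l \<times> {..b} \<times> {..<2 ^ b})
    \<union> (\<lambda>(i, j, d, p). TOut i j d p) ` ({..2 * l} \<times> coord_vectors b l \<times> {..b} \<times> {..<2 ^ b})
    \<union> (\<lambda>(i, j, x, t). Aux i j (j[cfun l i - 1 := x]) t)
        ` ({..<2 * l} \<times> coord_vectors b l \<times> {..<2 ^ b} \<times> {..<Aconst b l + (2 ^ b)\<^sup>2})"
    (is "_ \<subseteq> ?R")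
proof
  fix w
  assume "w \<in> GV b l"
  then consider (hv) i j where "w = HV i j" "i \<le> 2 * l" "validj b l j"
    | (tree) i j d p where "w = TIn i j d p \<or> w = TOut i j d p" "i \<le> 2 * l" "validj b l j"
        "d \<le> b" "p < 2 ^ d"
    | (aux) i j j' t where "w = Aux i j j' t" "Hadj b l i j j'" "t < plen b l i j j'"
    unfolding GV_def by fastforce
  then show "w \<in> ?R"
  proof cases
    case hv
    then show ?thesis
      by (auto simp: mem_coord_vectors_iff)
  next
    case tree
    then have "p < 2 ^ b"
      using order_less_le_trans[OF tree(5) power_increasing[OF tree(4), of "2::nat"]] by simp
    let ?D = "{..2 * l} \<times> coord_vectors b l \<times> {..b} \<times> {..<2 ^ b}"
    have mem: "(i, j, d, p) \<in> ?D"
      using tree \<open>p < 2 ^ b\<close> by (simp add: mem_coord_vectors_iff)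
    have "TIn i j d p \<in> (\<lambda>(i, j, d, p). TIn i j d p) ` ?D"
      "TOut i j d p \<in> (\<lambda>(i, j, d, p). TOut i j d p) ` ?D"
      by (rule rev_image_eqI[OF mem], simp)+
    then show ?thesis
      using tree(1) by blast
  next
    case aux
    define c where "c = cfun l i - 1"
    have i: "i < 2 * l" and j: "validj b l j" and j': "validj b l j'"
      using aux by (auto simp: Hadj_def)
    have x: "j' ! c < 2 ^ b"
      using validj_nth_less[OF j' cfun_index_less[OF i]] by (simp add: c_def)
    have "t < Aconst b l + (2 ^ b)\<^sup>2"
      using aux Hweight_le[OF aux(2)] by (simp add: plen_def)
    then have "(i, j, j' ! c, t) \<in> {..<2 * l} \<times> coord_vectors b l \<times> {..<2 ^ b} \<times> {..<Aconst b l + (2 ^ b)\<^sup>2}"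
      using i j x by (simp add: mem_coord_vectors_iff)
    moreover have "w = (\<lambda>(i, j, x, t). Aux i j (j[cfun l i - 1 := x]) t) (i, j, j' ! c, t)"
      using aux Hadj_list_update(1)[OF aux(2)] c_def by simp
    ultimately show ?thesis
      by blast
  qed
qed

lemma finite_GV: "finite (GV b l)"
  by (rule finite_subset[OF GV_subset]) (auto intro!: finite_cartesian_product finite_coord_vectors)

lemma card_Un4_le: "card (A \<union> B \<union> C \<union> D) \<le> card A + card B + card C + card D"
  using card_Un_le[of "A \<union> B \<union> C" D] card_Un_le[of "A \<union> B" C] card_Un_le[of A B] by linarith

lemma vertex_count_poly_le:
  fixes l s :: nat
  assumes "1 \<le> l" "2 \<le> s"
  shows "(2 * l + 1) + 2 * (2 * l + 1) * s * s + 2 * l * s * (3 * l * s * s + s * s) \<le> 32 * l * l * s * s * s"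
proof -
  define q where "q = l * l * s * s * s"
  have "l * 1 * 1 * 1 * 1 \<le> l * l * s * s * s"
    using assms by (intro mult_le_mono) auto
  then have "l \<le> q"
    by (simp add: q_def)
  moreover have "1 * 1 * (l * s * s) \<le> l * s * (l * s * s)"
    using assms by (intro mult_le_mono) auto
  then have "l * s * s \<le> q"
    by (simp add: q_def algebra_simps)
  moreover have "1 * (l * s * s * s) \<le> l * (l * s * s * s)"
    using assms by (intro mult_le_mono) auto
  then have "l * s * s * s \<le> q"
    by (simp add: q_def algebra_simps)
  moreover have "1 * (s * s) \<le> l * (s * s)"
    using assms by (intro mult_le_mono) auto
  then have "s * s \<le> l * s * s"
    by (simp add: algebra_simps)
  moreover have "(2 * l + 1) + 2 * (2 * l + 1) * s * s + 2 * l * s * (3 * l * s * s + s * s)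
      = 2 * l + 1 + 4 * (l * s * s) + 2 * (s * s) + 6 * q + 2 * (l * s * s * s)"
    by (simp add: q_def algebra_simps)
  moreover have "32 * l * l * s * s * s = 32 * q"
    by (simp add: q_def algebra_simps)
  ultimately show ?thesis
    using assms(1) by linarith
qed

lemma card_GV_le:
  assumes b: "1 \<le> b" and l: "1 \<le> l"
  shows "card (GV b l) \<le> 32 * l\<^sup>2 * (2 ^ b) ^ 3 * 2 ^ (b * l)"
proof -
  define s where "s = (2::nat) ^ b"
  define X where "X = s ^ l"
  have "(2::nat) ^ 1 \<le> 2 ^ b"
    using b by (intro power_increasing) auto
  then have s: "2 \<le> s" "b + 1 \<le> s"
    using Suc_leI[OF less_exp[of b]] by (simp_all add: s_def)
  let ?H = "{..2 * l} \<times> coord_vectors b l"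
  let ?T = "{..2 * l} \<times> coord_vectors b l \<times> {..b} \<times> {..<(2::nat) ^ b}"
  let ?A = "{..<2 * l} \<times> coord_vectors b l \<times> {..<(2::nat) ^ b} \<times> {..<Aconst b l + (2 ^ b)\<^sup>2}"
  have fin: "finite ?H" "finite ?T" "finite ?A"
    by (auto intro!: finite_cartesian_product finite_coord_vectors)
  have "card (GV b l) \<le> card ((\<lambda>(i, j). HV i j) ` ?H) + card ((\<lambda>(i, j, d, p). TIn i j d p) ` ?T)
      + card ((\<lambda>(i, j, d, p). TOut i j d p) ` ?T) + card ((\<lambda>(i, j, x, t). Aux i j (j[cfun l i - 1 := x]) t) ` ?A)"
    using card_mono[OF _ GV_subset] card_Un4_le fin by (meson finite_Un finite_imageI order_trans)
  also have "\<dots> \<le> card ?H + card ?T + card ?T + card ?A"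
    using fin by (intro add_mono card_image_le)
  also have "\<dots> = (2 * l + 1) * X + 2 * ((2 * l + 1) * X * (b + 1) * s) + 2 * l * X * s * (3 * l * s * s + s * s)"
    by (simp add: card_cartesian_product card_coord_vectors X_def s_def Aconst_def power2_eq_square
        algebra_simps)
  also have "\<dots> \<le> (2 * l + 1) * X + 2 * ((2 * l + 1) * X * s * s) + 2 * l * X * s * (3 * l * s * s + s * s)"
    using s by (intro add_mono mult_le_mono) auto
  also have "\<dots> = ((2 * l + 1) + 2 * (2 * l + 1) * s * s + 2 * l * s * (3 * l * s * s + s * s)) * X"
    by (simp add: algebra_simps)
  also have "\<dots> \<le> (32 * l * l * s * s * s) * X"
    by (rule mult_le_mono1[OF vertex_count_poly_le[OF l s(1)]])
  finally show ?thesis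
    by (simp add: s_def X_def power_mult power2_eq_square power3_eq_cube algebra_simps)
qed

lemma card_GV_ge:
  assumes l: "1 \<le> l"
  shows "l * 2 ^ b * 2 ^ (b * l) \<le> card (GV b l)"
proof -
  let ?D = "{..<l} \<times> coord_vectors b l \<times> {..<(2::nat) ^ b}"
  have "(\<lambda>(i, j, p). TOut i j b p) ` ?D \<subseteq> GV b l"
    by (auto simp: GV_def mem_coord_vectors_iff)
  moreover have "inj_on (\<lambda>(i, j, p). TOut i j b p) ?D"
    by (auto simp: inj_on_def)
  ultimately have "card ?D \<le> card (GV b l)"
    using card_inj_on_le finite_GV by blast
  then show ?thesis
    by (simp add: card_cartesian_product card_coord_vectors power_mult algebra_simps)
qed

definition even_pairs :: "nat \<Rightarrow> nat \<Rightarrow> (nat list \<times> nat list) set" where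
  "even_pairs b l = {(a, a'). validj b l a \<and> validj b l a' \<and> (\<forall>k<l. even (a ! k + a' ! k))}"

lemma finite_even_pairs: "finite (even_pairs b l)"
proof -
  have "even_pairs b l \<subseteq> coord_vectors b l \<times> coord_vectors b l"
    by (auto simp: even_pairs_def mem_coord_vectors_iff)
  then show ?thesis
    using finite_coord_vectors finite_subset by blast
qed

text \<open>A pair is determined by a and the halves of the coordinates of a'.\<close>

lemma card_even_pairs_ge:
  assumes b: "1 \<le> b"
  shows "(2 ^ b) ^ l * (2 ^ (b - 1)) ^ l \<le> card (even_pairs b l)"
proof -
  define g where "g = (\<lambda>(a::nat list, z::nat list). (a, map (\<lambda>k. 2 * z ! k + a ! k mod 2) [0..<l]))"
  have bb: "2 * 2 ^ (b - 1) = (2::nat) ^ b"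
    using b by (cases b) auto
  have "g ` (coord_vectors b l \<times> coord_vectors (b - 1) l) \<subseteq> even_pairs b l"
  proof
    fix x
    assume "x \<in> g ` (coord_vectors b l \<times> coord_vectors (b - 1) l)"
    then obtain a z where x: "x = g (a, z)" "validj b l a" "validj (b - 1) l z"
      by (auto simp: mem_coord_vectors_iff)
    have "2 * z ! k + a ! k mod 2 < 2 ^ b" if "k < l" for k
      using validj_nth_less[OF x(3) that] bb by (simp add: mod2_eq_if; linarith)
    then show "x \<in> even_pairs b l"
      using x by (auto simp: even_pairs_def g_def validj_def)
  qed
  moreover have "inj_on g (coord_vectors b l \<times> coord_vectors (b - 1) l)"
  proof (rule inj_onI)
    fix x y
    assume x: "x \<in> coord_vectors b l \<times> coord_vectors (b - 1) l"
      and y: "y \<in> coord_vectors b l \<times> coord_vectors (b - 1) l" and eq: "g x = g y"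
    obtain a z a2 z2 where xy: "x = (a, z)" "y = (a2, z2)"
      by (cases x, cases y) auto
    have a: "a = a2" and m: "map (\<lambda>k. 2 * z ! k + a ! k mod 2) [0..<l] = map (\<lambda>k. 2 * z2 ! k + a2 ! k mod 2) [0..<l]"
      using eq xy unfolding g_def by (simp_all only: prod.case prod.inject, blast+)
    have "length z = l" "length z2 = l"
      using x y xy by (auto simp: mem_coord_vectors_iff validj_def)
    moreover have "z ! k = z2 ! k" if "k < l" for k
      using m a that by (auto simp: map_eq_conv)
    ultimately have "z = z2"
      by (simp add: nth_equalityI)
    then show "x = y"
      using xy a by simp
  qed
  ultimately have "card (coord_vectors b l \<times> coord_vectors (b - 1) l) \<le> card (even_pairs b l)"
    using card_inj_on_le finite_even_pairs by blast
  then show ?thesis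
    by (simp add: card_cartesian_product card_coord_vectors)
qed

lemma hub_on_route:
  assumes \<sigma>: "valid_labeling b l \<sigma>" and b: "1 \<le> b"
    and hub: "hub_labeling (GV b l) (GE b l \<sigma>) S" and p: "(a, a') \<in> even_pairs b l"
  shows "\<exists>w \<in> S (HV 0 a) \<inter> S (HV (2 * l) a'). w \<in> GV b l \<and> on_route l a a' (fst (owner w)) (snd (owner w))"
proof -
  have a: "validj b l a" and a': "validj b l a'" and even: "\<forall>k<l. even (a ! k + a' ! k)"
    using p by (auto simp: even_pairs_def)
  have u: "HV 0 a \<in> GV b l" and v: "HV (2 * l) a' \<in> GV b l"
    using a a' unfolding GV_def by auto
  then obtain w where w: "w \<in> S (HV 0 a) \<inter> S (HV (2 * l) a')"
    and geodesic: "gdist (GE b l \<sigma>) (HV 0 a) w + gdist (GE b l \<sigma>) w (HV (2 * l) a')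
      = gdist (GE b l \<sigma>) (HV 0 a) (HV (2 * l) a')"
    using hub reach_GV[OF a \<sigma> b v] unfolding hub_labeling_def by blast
  moreover have "w \<in> GV b l"
    using hub w u unfolding hub_labeling_def by blast
  ultimately show ?thesis
    using shortest_path_owner_on_route[OF a a' even \<sigma> b] by blast
qed

lemma card_le_card_by_charging:
  assumes "finite Sig" and "\<And>p. p \<in> P \<Longrightarrow> (e p, h p) \<in> Sig"
    and "\<And>p q. p \<in> P \<Longrightarrow> q \<in> P \<Longrightarrow> e p = e q \<Longrightarrow> h p = h q \<Longrightarrow> p = q"
  shows "card P \<le> card Sig"
  using card_inj_on_le[of "\<lambda>p. (e p, h p)" P Sig] assms by (auto simp: inj_on_def)

text \<open>Charging: a pair whose hub is owned by a vertex in the first half of the layers is recovered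
  from a' and the hub, otherwise from a and the hub.\<close>

lemma card_even_pairs_le_hub_sum:
  assumes \<sigma>: "valid_labeling b l \<sigma>" and b: "1 \<le> b"
    and hub: "hub_labeling (GV b l) (GE b l \<sigma>) S"
  shows "card (even_pairs b l) \<le> 2 * (\<Sum>v\<in>GV b l. card (S v))"
proof -
  define P where "P = even_pairs b l"
  have "\<forall>p\<in>P. \<exists>w. w \<in> S (HV 0 (fst p)) \<inter> S (HV (2 * l) (snd p)) \<and> w \<in> GV b l
      \<and> on_route l (fst p) (snd p) (fst (owner w)) (snd (owner w))"
    using hub_on_route[OF \<sigma> b hub] unfolding P_def by force
  then obtain h where h: "\<And>p. p \<in> P \<Longrightarrow> h p \<in> S (HV 0 (fst p)) \<inter> S (HV (2 * l) (snd p))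
      \<and> h p \<in> GV b l \<and> on_route l (fst p) (snd p) (fst (owner (h p))) (snd (owner (h p)))"
    by (metis bchoice)
  have len: "length (fst p) = l" "length (snd p) = l" if "p \<in> P" for p
    using that by (auto simp: P_def even_pairs_def validj_def)
  have HV: "HV 0 (fst p) \<in> GV b l" "HV (2 * l) (snd p) \<in> GV b l" if "p \<in> P" for p
    using that unfolding P_def even_pairs_def GV_def by auto
  define Sig where "Sig = Sigma (GV b l) S"
  have S: "\<forall>v\<in>GV b l. S v \<subseteq> GV b l"
    using hub by (simp add: hub_labeling_def)
  then have fin: "finite Sig" and card_Sig: "card Sig = (\<Sum>v\<in>GV b l. card (S v))"
    using finite_GV finite_subset unfolding Sig_def by (blast, metis card_SigmaI)
  define P1 where "P1 = {p \<in> P. fst (owner (h p)) \<le> l}"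
  define P2 where "P2 = {p \<in> P. \<not> fst (owner (h p)) \<le> l}"
  have "card P1 \<le> card Sig"
  proof (rule card_le_card_by_charging[OF fin])
    show "(HV (2 * l) (snd p), h p) \<in> Sig" if "p \<in> P1" for p
      using h HV that unfolding P1_def Sig_def by auto
    show "p = q" if "p \<in> P1" "q \<in> P1" "HV (2 * l) (snd p) = HV (2 * l) (snd q)" "h p = h q" for p q
      using on_route_determines_start[of l "fst p" "snd p" _ _ "fst q"] h[of p] h[of q] len[of p] len[of q] that
      unfolding P1_def by (auto simp: prod_eq_iff)
  qed
  moreover have "card P2 \<le> card Sig"
  proof (rule card_le_card_by_charging[OF fin])
    show "(HV 0 (fst p), h p) \<in> Sig" if "p \<in> P2" for p
      using h HV that unfolding P2_def Sig_def by auto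
    show "p = q" if "p \<in> P2" "q \<in> P2" "HV 0 (fst p) = HV 0 (fst q)" "h p = h q" for p q
      using on_route_determines_end[of l "fst p" "snd p" _ _ "snd q"] h[of p] h[of q] len[of p] len[of q] that
      unfolding P2_def by (auto simp: prod_eq_iff)
  qed
  moreover have "P = P1 \<union> P2"
    by (auto simp: P1_def P2_def)
  then have "card P \<le> card P1 + card P2"
    by (metis card_Un_le)
  ultimately show ?thesis
    using card_Sig by (simp add: P_def)
qed

lemma two_powr_size_bound:
  assumes "1 \<le> l"
  shows "2 powr (real (b * l) + real c * (real b + log 2 (real l))) = real (2 ^ (b * l) * 2 ^ (c * b) * l ^ c)"
proof -
  have "2 powr (real c * log 2 (real l)) = (2 powr log 2 (real l)) powr real c"
    by (simp add: powr_powr mult.commute)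
  also have "\<dots> = real l powr real c"
    using assms by simp
  also have "\<dots> = real (l ^ c)"
    using assms by (simp add: powr_realpow)
  finally have log: "2 powr (real c * log 2 (real l)) = real (l ^ c)" .
  have "2 powr (real (b * l) + real c * (real b + log 2 (real l)))
      = 2 powr real (b * l) * 2 powr real (c * b) * 2 powr (real c * log 2 (real l))"
    by (simp only: powr_add[symmetric]) (simp add: algebra_simps)
  also have "\<dots> = real (2 ^ (b * l) * 2 ^ (c * b) * l ^ c)"
    unfolding log powr_realpow[OF zero_less_numeral] by simp
  finally show ?thesis .
qed

lemma card_GV_bounds:
  assumes b: "1 \<le> b" and l: "1 \<le> l"
  shows "2 powr (real (b * l) + 1 * (real b + log 2 (real l))) \<le> real (card (GV b l))"
    and "real (card (GV b l)) \<le> 2 powr (real (b * l) + 8 * (real b + log 2 (real l)))"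
proof -
  have "2 powr (real (b * l) + 1 * (real b + log 2 (real l))) = real (2 ^ (b * l) * 2 ^ (1 * b) * l ^ 1)"
    using two_powr_size_bound[OF l, of b 1] by simp
  also have "\<dots> \<le> real (card (GV b l))"
    using card_GV_ge[OF l, of b] by (simp only: of_nat_le_iff) (simp add: algebra_simps)
  finally show "2 powr (real (b * l) + 1 * (real b + log 2 (real l))) \<le> real (card (GV b l))" .
  have "(32::nat) * (2 ^ b) ^ 3 \<le> 2 ^ (8 * b)"
  proof -
    have "(32::nat) * (2 ^ b) ^ 3 = 2 ^ (5 + 3 * b)"
      by (simp add: power_add power_mult[symmetric] mult.commute)
    also have "\<dots> \<le> 2 ^ (8 * b)"
      using b by (intro power_increasing) auto
    finally show ?thesis .
  qed
  moreover have "l\<^sup>2 \<le> l ^ 8"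
    using l by (intro power_increasing) auto
  ultimately have factor: "32 * (2 ^ b) ^ 3 * l\<^sup>2 \<le> 2 ^ (8 * b) * l ^ 8"
    by (rule mult_le_mono)
  have "card (GV b l) \<le> (32 * (2 ^ b) ^ 3 * l\<^sup>2) * 2 ^ (b * l)"
    using card_GV_le[OF b l] by (simp add: algebra_simps)
  also have "\<dots> \<le> (2 ^ (8 * b) * l ^ 8) * 2 ^ (b * l)"
    using factor by (rule mult_le_mono1)
  finally have "real (card (GV b l)) \<le> real (2 ^ (b * l) * 2 ^ (8 * b) * l ^ 8)"
    by (simp only: of_nat_le_iff mult_ac)
  then show "real (card (GV b l)) \<le> 2 powr (real (b * l) + 8 * (real b + log 2 (real l)))"
    using two_powr_size_bound[OF l, of b 8] by simp
qed

lemma hub_sum_bound_nat: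
  fixes P Sg N :: nat
  assumes b: "1 \<le> b"
    and pairs_hubs: "P \<le> 2 * Sg" and pairs: "(2 ^ b) ^ l * (2 ^ (b - 1)) ^ l \<le> P"
    and vertices: "N \<le> 32 * l\<^sup>2 * (2 ^ b) ^ 3 * 2 ^ (b * l)"
  shows "2 ^ (b * l) * N \<le> 2 ^ (9 * b + 9 * l) * Sg"
proof -
  define T where "T = (2::nat) ^ (b * l)"
  have "(2::nat) ^ (b - 1) * 2 = 2 ^ b"
    using b by (cases b) auto
  then have "((2::nat) ^ b) ^ l * (2 ^ (b - 1)) ^ l * 2 ^ l = T * T"
    by (simp add: T_def power_mult power_mult_distrib[symmetric] mult.assoc)
  then have TT: "T * T \<le> 2 * Sg * 2 ^ l"
    using pairs pairs_hubs by (metis mult_le_mono1 order_trans)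
  have "(64::nat) \<le> 2 ^ (6 * b)"
    using b power_increasing[of 6 "6 * b" "2::nat"] by simp
  moreover have "l\<^sup>2 \<le> (2::nat) ^ l * 2 ^ l"
    using less_exp[of l] by (simp add: power2_eq_square mult_le_mono less_imp_le)
  ultimately have "64 * l\<^sup>2 \<le> (2::nat) ^ (6 * b) * (2 ^ l * 2 ^ l)"
    by (rule mult_le_mono)
  then have "64 * l\<^sup>2 * ((2 ^ b) ^ 3 * 2 ^ l) \<le> (2::nat) ^ (6 * b) * (2 ^ l * 2 ^ l) * ((2 ^ b) ^ 3 * 2 ^ l)"
    by (rule mult_le_mono1)
  also have "\<dots> = 2 ^ (9 * b + 3 * l)"
    by (simp add: power_mult[symmetric] power_add[symmetric] algebra_simps)
  also have "\<dots> \<le> 2 ^ (9 * b + 9 * l)"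
    by (intro power_increasing) auto
  finally have C: "64 * l\<^sup>2 * (2 ^ b) ^ 3 * 2 ^ l \<le> (2::nat) ^ (9 * b + 9 * l)"
    by (simp add: mult.assoc)
  have "T * N \<le> 32 * l\<^sup>2 * (2 ^ b) ^ 3 * (T * T)"
    using vertices by (simp add: T_def algebra_simps)
  also have "\<dots> \<le> 32 * l\<^sup>2 * (2 ^ b) ^ 3 * (2 * Sg * 2 ^ l)"
    using TT by simp
  also have "\<dots> = (64 * l\<^sup>2 * (2 ^ b) ^ 3 * 2 ^ l) * Sg"
    by (simp add: algebra_simps)
  also have "\<dots> \<le> 2 ^ (9 * b + 9 * l) * Sg"
    using C by simp
  finally show ?thesis
    by (simp add: T_def)
qed

lemma average_hub_size_ge:
  assumes \<sigma>: "valid_labeling b l \<sigma>" and b: "1 \<le> b" and l: "1 \<le> l"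
    and hub: "hub_labeling (GV b l) (GE b l \<sigma>) S"
  shows "2 powr (real (b * l) - 9 * (real b + real l))
    \<le> (\<Sum>v\<in>GV b l. real (card (S v))) / real (card (GV b l))"
proof -
  define Sg where "Sg = (\<Sum>v\<in>GV b l. card (S v))"
  define N where "N = card (GV b l)"
  have "0 < l * 2 ^ b * 2 ^ (b * l)"
    using l by simp
  then have "0 < N"
    using card_GV_ge[OF l, of b] unfolding N_def by linarith
  have "2 ^ (b * l) * N \<le> 2 ^ (9 * b + 9 * l) * Sg"
    using hub_sum_bound_nat[OF b card_even_pairs_le_hub_sum[OF \<sigma> b hub] card_even_pairs_ge[OF b]
        card_GV_le[OF b l]]
    by (simp add: Sg_def N_def)
  then have "real (2 ^ (b * l)) * real N \<le> real Sg * real (2 ^ (9 * b + 9 * l))"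
    by (simp only: of_nat_mult[symmetric] of_nat_le_iff mult.commute)
  then have "real (2 ^ (b * l)) / real (2 ^ (9 * b + 9 * l)) \<le> real Sg / real N"
    using \<open>0 < N\<close> by (simp add: field_simps)
  moreover have "2 powr (real (b * l) - 9 * (real b + real l)) = real (2 ^ (b * l)) / real (2 ^ (9 * b + 9 * l))"
    by (simp add: powr_diff[symmetric] powr_realpow[symmetric] algebra_simps)
  ultimately show ?thesis
    by (simp add: Sg_def N_def)
qed

theorem theorem4:
  shows "\<exists>c1 c2 c3 :: real. c1 > 0 \<and> c2 > 0 \<and> c3 > 0 \<and>
    (\<forall>(b::nat) (l::nat) \<sigma>. b \<ge> 1 \<longrightarrow> l \<ge> 1 \<longrightarrow> valid_labeling b l \<sigma> \<longrightarrow>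
       (2 powr (real (b * l) + c1 * (real b + log 2 (real l))) \<le> real (card (GV b l)) \<and>
        real (card (GV b l)) \<le> 2 powr (real (b * l) + c2 * (real b + log 2 (real l)))) \<and>
       Max (degree (GE b l \<sigma>) ` GV b l) = 3 \<and>
       (\<forall>S. hub_labeling (GV b l) (GE b l \<sigma>) S \<longrightarrow>
          (\<Sum>v\<in>GV b l. real (card (S v))) / real (card (GV b l))
            \<ge> 2 powr (real (b * l) - c3 * (real b + real l))))"
proof (rule exI[of _ 1], rule exI[of _ 8], rule exI[of _ 9], intro conjI allI impI)
  show "(1::real) > 0" "(8::real) > 0" "(9::real) > 0"
    by simp_all
  fix b l :: nat and \<sigma>
  assume b: "1 \<le> b" and l: "1 \<le> l" and \<sigma>: "valid_labeling b l \<sigma>"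
  show "2 powr (real (b * l) + 1 * (real b + log 2 (real l))) \<le> real (card (GV b l))"
    and "real (card (GV b l)) \<le> 2 powr (real (b * l) + 8 * (real b + log 2 (real l)))"
    using card_GV_bounds[OF b l] by simp_all
  show "Max (degree (GE b l \<sigma>) ` GV b l) = 3"
    using degree_le_3[OF \<sigma> b] degree_out_root(1)[OF b l] degree_out_root(2)[OF b l, of \<sigma>] finite_GV
    by (intro Max_eqI) (auto intro: rev_image_eqI)
  fix S
  assume "hub_labeling (GV b l) (GE b l \<sigma>) S"
  then show "(\<Sum>v\<in>GV b l. real (card (S v))) / real (card (GV b l))
      \<ge> 2 powr (real (b * l) - 9 * (real b + real l))"
    using average_hub_size_ge[OF \<sigma> b l] by simp
qed

end
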